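(* Let $\delta\in(0,1)$, $\eta>0$, $t>0$, let $\mathbf x_\star\in\mathbb C^N$ be a unit vector, and let $\mathbf a=\mathbf g+\imath\mathbf g'$ where $\mathbf g,\mathbf g'$ are independent $\mathrm{Normal}(\mathbf 0,\tfrac12\mathbf I_N)$ random vectors in $\mathbb R^N$. Define $$\mathcal R_\delta=\left\{\mathbf h\in\mathbb C^N:\ \big\|\mathbf h-(\mathbf x_\star^*\mathbf h)\mathbf x_\star\big\|_2\ge\delta\,\big|\mathrm{Im}(\mathbf x_\star^*\mathbf h)\big|\right\},$$ $$\mathcal C'_\delta=\left\{\mathbf z\in\mathbb C^N:\ \delta\langle\mathbf x_\star,\mathbf z\rangle\ge-\sqrt{1-\delta^2}\sqrt{\|\mathbf z\|_2^2-|\mathbf x_\star^*\mathbf z|^2}\right\}.$$ Then for every $\mathbf h\in\mathcal C'_\delta\cap\mathcal R_\delta$ with $\|\mathbf h\|_2>(t\eta)^{-1}$, $$\mathbb P\Big(\langle\mathbf a\mathbf a^*\mathbf x_\star,\mathbf h\rangle>\tfrac12\eta^{-1}\Big)\ge\left(\frac12-\frac{\sqrt{1-\delta^2}}{2}\right)e^{-2\sqrt2\,\delta^{-2}t}.$$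
   Context: $\mathbb C^N$ is regarded as a real inner-product space with inner product $\langle\mathbf x_1,\mathbf x_2\rangle=\mathrm{Re}(\mathbf x_1^*\mathbf x_2)$. $\mathbf x^*$ denotes the conjugate transpose. *)

theory Defs
  imports "HOL-Probability.Probability"
begin

text \<open>C^N is modelled as complex ^ 'n for a finite index type 'n (N = CARD('n)).
  The library norm on complex ^ 'n is the Euclidean 2-norm.\<close>

definition cdot :: "complex ^ 'n \<Rightarrow> complex ^ 'n \<Rightarrow> complex" where
  "cdot x y = (\<Sum>i\<in>UNIV. cnj (x $ i) * y $ i)"

definition rinner :: "complex ^ 'n \<Rightarrow> complex ^ 'n \<Rightarrow> real" where
  "rinner x y = Re (cdot x y)"

definition R_set :: "complex ^ 'n \<Rightarrow> real \<Rightarrow> (complex ^ 'n) set" where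
  "R_set xs \<delta> = {h. norm (h - cdot xs h *s xs) \<ge> \<delta> * \<bar>Im (cdot xs h)\<bar>}"

definition C'_set :: "complex ^ 'n \<Rightarrow> real \<Rightarrow> (complex ^ 'n) set" where
  "C'_set xs \<delta> = {z. \<delta> * rinner xs z \<ge>
      - sqrt (1 - \<delta>^2) * sqrt ((norm z)^2 - (cmod (cdot xs z))^2)}"

text \<open>Law of a random vector in R^N with i.i.d. Normal(0,1/2) coordinates
  (standard deviation sqrt(1/2)).\<close>
definition gauss_half :: "('n::finite \<Rightarrow> real) measure" where
  "gauss_half = PiM UNIV (\<lambda>_. density lborel (normal_density 0 (sqrt (1/2))))"

definition avec :: "('n::finite \<Rightarrow> real) \<Rightarrow> ('n \<Rightarrow> real) \<Rightarrow> complex ^ 'n" where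
  "avec g g' = (\<chi> i. Complex (g i) (g' i))"

end

theory Submission
  imports Defs
begin

text \<open>
  Write \<open>\<alpha> = x\<^sub>\<star>\<^sup>* h\<close> and \<open>h' = h - \<i> Im \<alpha> x\<^sub>\<star>\<close>, so that \<open>x\<^sub>\<star>\<^sup>* h' = Re \<alpha>\<close> is real.
  With \<open>m = \<surd>\<parallel>h'\<parallel>\<close> and \<open>y\<^sub>\<pm> = m x\<^sub>\<star> \<pm> h'/m\<close> one has the polarisation identity
  \<open>\<langle>a a\<^sup>* x\<^sub>\<star>, h\<rangle> = (\<bar>a\<^sup>* y\<^sub>+\<bar>\<^sup>2 - \<bar>a\<^sup>* y\<^sub>-\<bar>\<^sup>2) / 4\<close>, where \<open>y\<^sub>+ \<bottom> y\<^sub>-\<close> and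
  \<open>\<parallel>y\<^sub>\<pm>\<parallel>\<^sup>2 = 2 (\<parallel>h'\<parallel> \<pm> Re \<alpha>)\<close>.  Identifying \<open>\<complex>\<^sup>N\<close> with \<open>\<real>\<^sup>2\<^sup>N\<close>, the law of \<open>a\<close> is an
  isotropic Gaussian, which is invariant under orthogonal maps; hence \<open>a\<^sup>* y\<^sub>+\<close> and \<open>a\<^sup>* y\<^sub>-\<close> are
  independent complex Gaussians with \<open>\<bar>a\<^sup>* y\<^sub>\<pm>\<bar>\<^sup>2\<close> exponentially distributed with means
  \<open>\<parallel>y\<^sub>\<pm>\<parallel>\<^sup>2\<close>.  The probability is therefore computed exactly:
  \<open>P(\<bar>a\<^sup>* y\<^sub>+\<bar>\<^sup>2 > \<bar>a\<^sup>* y\<^sub>-\<bar>\<^sup>2 + C) = \<parallel>y\<^sub>+\<parallel>\<^sup>2 / (\<parallel>y\<^sub>+\<parallel>\<^sup>2 + \<parallel>y\<^sub>-\<parallel>\<^sup>2) \<cdot> exp (-C / \<parallel>y\<^sub>+\<parallel>\<^sup>2)\<close>.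
  The two geometric conditions on \<open>h\<close> bound the prefactor below by \<open>(1 - \<surd>(1-\<delta>\<^sup>2))/2\<close> and,
  together with \<open>\<parallel>h\<parallel> > 1/(t\<eta>)\<close>, the exponent by \<open>2\<surd>2 t/\<delta>\<^sup>2\<close>.
\<close>

section \<open>Orthogonal invariance of the isotropic Gaussian measure\<close>

text \<open>The change-of-variables theory requires a well-ordered index type, so the coordinates
  of \<open>\<real>\<^sup>2\<^sup>N\<close> are indexed by a copy of a finite type ordered via \<open>to_nat\<close>.\<close>

typedef ('a::finite) ordered_copy = "UNIV :: 'a set" by auto

instance ordered_copy :: (finite) finite
  by standard (metis finite_class.finite_UNIV finite_imageI type_definition.Abs_image
      type_definition_ordered_copy)

instantiation ordered_copy :: (finite) linorder
begin
definition less_eq_ordered_copy :: "'a ordered_copy \<Rightarrow> 'a ordered_copy \<Rightarrow> bool" where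
  "less_eq_ordered_copy x y \<longleftrightarrow> to_nat (Rep_ordered_copy x) \<le> to_nat (Rep_ordered_copy y)"
definition less_ordered_copy :: "'a ordered_copy \<Rightarrow> 'a ordered_copy \<Rightarrow> bool" where
  "less_ordered_copy x y \<longleftrightarrow> to_nat (Rep_ordered_copy x) < to_nat (Rep_ordered_copy y)"
instance
  by standard (auto simp: less_eq_ordered_copy_def less_ordered_copy_def Rep_ordered_copy_inject)
end

instance ordered_copy :: (finite) wellorder
proof
  fix P :: "'a ordered_copy \<Rightarrow> bool" and a
  assume step: "\<And>x. (\<And>y. y < x \<Longrightarrow> P y) \<Longrightarrow> P x"
  show "P a"
  proof (induction "to_nat (Rep_ordered_copy a)" arbitrary: a rule: less_induct)
    case less
    then show ?case using step by (auto simp: less_ordered_copy_def)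
  qed
qed

lemma orthogonal_transformation_borel_measurable:
  fixes T :: "'a::euclidean_space \<Rightarrow> 'a"
  assumes "orthogonal_transformation T"
  shows "T \<in> borel_measurable borel"
  using assms orthogonal_transformation_linear
  by (intro borel_measurable_continuous_onI linear_continuous_on
      linear_conv_bounded_linear[THEN iffD1]) blast

lemma distr_lborel_orthogonal_transformation:
  fixes T :: "(real, 'm::{finite,wellorder}) vec \<Rightarrow> (real, 'm) vec"
  assumes T: "orthogonal_transformation T"
  shows "distr lborel borel T = lborel"
proof (rule lborel_eqI[symmetric])
  note T_meas[measurable] = orthogonal_transformation_borel_measurable[OF T]
  have T': "orthogonal_transformation (inv T)"
    using orthogonal_transformation_inv[OF T] .
  fix l u :: "(real, 'm) vec"
  assume "\<And>b. b \<in> Basis \<Longrightarrow> l \<bullet> b \<le> u \<bullet> b"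
  then have box: "emeasure lborel (box l u) = (\<Prod>b\<in>Basis. (u - l) \<bullet> b)"
    by (simp add: emeasure_lborel_box_eq)
  have preimage: "T -` box l u = inv T ` box l u"
    using T orthogonal_transformation_bij bij_vimage_eq_inv_image by blast
  have borel: "inv T ` box l u \<in> sets borel"
    unfolding preimage[symmetric] by (rule measurable_sets_borel[OF T_meas]) simp
  have "measure lborel (inv T ` box l u) = measure lborel (box l u)"
    using measure_orthogonal_image[OF T', of "box l u"] borel by simp
  moreover have "inv T ` box l u \<in> fmeasurable lborel"
    using measurable_orthogonal_image[OF T', of "box l u"] borel
    using emeasure_lborel_box_finite[of l u] by (simp add: fmeasurable_def)
  ultimately have "emeasure lborel (inv T ` box l u) = emeasure lborel (box l u)"
    using emeasure_lborel_box_finite[of l u]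
    by (metis emeasure_eq_ennreal_measure fmeasurableD2 infinity_ennreal_def less_irrefl)
  then show "emeasure (distr lborel borel T) (box l u) = (\<Prod>b\<in>Basis. (u - l) \<bullet> b)"
    by (simp add: emeasure_distr preimage box)
qed simp

definition normal_measure :: "real \<Rightarrow> real measure" where
  "normal_measure \<sigma> = density lborel (\<lambda>x. ennreal (normal_density 0 \<sigma> x))"

definition iso_normal_density :: "real \<Rightarrow> 'a::euclidean_space \<Rightarrow> real" where
  "iso_normal_density \<sigma> x = (\<Prod>b\<in>Basis. normal_density 0 \<sigma> (x \<bullet> b))"

definition iso_normal :: "real \<Rightarrow> 'a::euclidean_space measure" where
  "iso_normal \<sigma> = density lborel (\<lambda>x. ennreal (iso_normal_density \<sigma> x))"

lemma sets_normal_measure[simp]: "sets (normal_measure \<sigma>) = sets borel"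
  by (simp add: normal_measure_def)

lemma space_normal_measure[simp]: "space (normal_measure \<sigma>) = UNIV"
  by (simp add: normal_measure_def)

lemma prob_space_normal_measure: "\<sigma> > 0 \<Longrightarrow> prob_space (normal_measure \<sigma>)"
  unfolding normal_measure_def by (rule prob_space_normal_density)

lemma sets_iso_normal[simp]: "sets (iso_normal \<sigma>) = sets borel"
  by (simp add: iso_normal_def)

lemma space_iso_normal[simp]: "space (iso_normal \<sigma>) = UNIV"
  by (simp add: iso_normal_def)

lemma borel_measurable_iso_normal_density[measurable]:
  "iso_normal_density \<sigma> \<in> borel_measurable borel"
  unfolding iso_normal_density_def by measurable

lemma iso_normal_density_eq:
  "iso_normal_density \<sigma> (x::'a::euclidean_space) =
     (1 / sqrt (2 * pi * \<sigma>\<^sup>2)) ^ DIM('a) * exp (- (x \<bullet> x) / (2 * \<sigma>\<^sup>2))"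
proof -
  have "iso_normal_density \<sigma> x =
      (\<Prod>b\<in>Basis. 1 / sqrt (2 * pi * \<sigma>\<^sup>2) * exp (- (x \<bullet> b)\<^sup>2 / (2 * \<sigma>\<^sup>2)))"
    unfolding iso_normal_density_def normal_density_def by simp
  also have "\<dots> = (1 / sqrt (2 * pi * \<sigma>\<^sup>2)) ^ DIM('a) * exp (\<Sum>b\<in>Basis. - (x \<bullet> b)\<^sup>2 / (2 * \<sigma>\<^sup>2))"
    by (simp only: prod.distrib prod_constant exp_sum finite_Basis)
  also have "(\<Sum>b\<in>Basis. - (x \<bullet> b)\<^sup>2 / (2 * \<sigma>\<^sup>2)) = - (x \<bullet> x) / (2 * \<sigma>\<^sup>2)"
    by (simp add: euclidean_inner[of x x] sum_divide_distrib[symmetric] sum_negf power2_eq_square)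
  finally show ?thesis .
qed

lemma distr_iso_normal_orthogonal_transformation:
  fixes T :: "(real, 'm::{finite,wellorder}) vec \<Rightarrow> (real, 'm) vec"
  assumes T: "orthogonal_transformation T"
  shows "distr (iso_normal \<sigma>) borel T = iso_normal \<sigma>"
proof -
  have T_meas: "T \<in> measurable lborel borel"
    using orthogonal_transformation_borel_measurable[OF T] by simp
  have density_T: "iso_normal_density \<sigma> (T x) = iso_normal_density \<sigma> x" for x
    using T by (simp add: iso_normal_density_eq orthogonal_transformation_def)
  have "density (distr lborel borel T) (\<lambda>x. ennreal (iso_normal_density \<sigma> x)) =
        distr (density lborel (\<lambda>x. ennreal (iso_normal_density \<sigma> (T x)))) borel T"
    by (rule density_distr[OF _ T_meas]) simp
  then show ?thesis
    unfolding iso_normal_def distr_lborel_orthogonal_transformation[OF T] density_T by (rule sym)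
qed

lemma prod_indicator_eq_indicator_all:
  assumes "finite J"
  shows "(\<Prod>j\<in>J. indicator (A j) (g y j) :: ennreal) = indicator {x. \<forall>j\<in>J. g x j \<in> A j} y"
  using assms by (induction J rule: finite_induct) (auto simp: indicator_def)

text \<open>The indicator of the event factorises over the coordinates; the factors of coordinates
  not in \<open>b ` J\<close> integrate to 1.\<close>

lemma emeasure_iso_normal_coordinates:
  fixes b :: "'j \<Rightarrow> 'a::euclidean_space"
  assumes \<sigma>: "\<sigma> > 0" and J: "finite J" and inj: "inj_on b J" and bB: "b ` J \<subseteq> Basis"
    and A: "\<And>j. j \<in> J \<Longrightarrow> A j \<in> sets borel"
  shows "emeasure (iso_normal \<sigma>) {x. \<forall>j\<in>J. x \<bullet> b j \<in> A j} =
    (\<Prod>j\<in>J. emeasure (normal_measure \<sigma>) (A j))"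
proof -
  define f where "f c t = ennreal (normal_density 0 \<sigma> t) *
    (if c \<in> b ` J then indicator (A (the_inv_into J b c)) t else 1)" for c t
  have event_borel: "{x::'a. \<forall>j\<in>J. x \<bullet> b j \<in> A j} \<in> sets borel"
    using A J by measurable
  have f_meas: "f c \<in> borel_measurable borel" for c
  proof (cases "c \<in> b ` J")
    case True
    then have "the_inv_into J b c \<in> J" using inj by (simp add: the_inv_into_into)
    then show ?thesis using True A unfolding f_def by measurable
  next
    case False
    then have "f c = (\<lambda>t. ennreal (normal_density 0 \<sigma> t))" by (simp add: f_def fun_eq_iff)
    then show ?thesis by simp
  qed
  have integral_f: "(\<integral>\<^sup>+t. f c t \<partial>lborel) =
      (if c \<in> b ` J then emeasure (normal_measure \<sigma>) (A (the_inv_into J b c)) else 1)" for c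
  proof (cases "c \<in> b ` J")
    case True
    then have "the_inv_into J b c \<in> J" using inj by (simp add: the_inv_into_into)
    then show ?thesis
      using True A by (simp add: f_def normal_measure_def emeasure_density)
  next
    case False
    interpret prob_space "normal_measure \<sigma>" using prob_space_normal_measure[OF \<sigma>] .
    show ?thesis
      using False emeasure_space_1 by (simp add: f_def normal_measure_def emeasure_density)
  qed
  have "indicator {x. \<forall>j\<in>J. x \<bullet> b j \<in> A j} x = (\<Prod>j\<in>J. indicator (A j) (x \<bullet> b j) :: ennreal)"
    for x :: 'a
    using prod_indicator_eq_indicator_all[OF J, where g="\<lambda>x j. x \<bullet> b j"] by simp
  also have "\<dots> x = (\<Prod>c\<in>Basis. if c \<in> b ` J then indicator (A (the_inv_into J b c)) (x \<bullet> c) else 1)"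
    for x :: 'a
    using inj bB by (simp add: prod.If_cases Int_absorb1 prod.reindex the_inv_into_f_f)
  finally have "emeasure (iso_normal \<sigma>) {x. \<forall>j\<in>J. x \<bullet> b j \<in> A j} =
      (\<integral>\<^sup>+x. (\<Prod>c\<in>Basis. f c (x \<bullet> c)) \<partial>lborel)"
    using \<sigma> event_borel
    by (simp add: iso_normal_def emeasure_density iso_normal_density_def f_def prod.distrib
        prod_ennreal)
  also have "\<dots> = (\<Prod>c\<in>Basis. (\<integral>\<^sup>+t. f c t \<partial>lborel))"
    by (rule nn_integral_lborel_prod) (use f_meas in auto)
  also have "\<dots> = (\<Prod>j\<in>J. emeasure (normal_measure \<sigma>) (A j))"
    using inj bB
    by (simp add: integral_f prod.If_cases Int_absorb1 prod.reindex the_inv_into_f_f)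
  finally show ?thesis .
qed

lemma orthonormal_extend_to_basis:
  fixes S :: "'a::euclidean_space set"
  assumes finS: "finite S" and S_orth: "pairwise orthogonal S" and S_unit: "\<And>s. s \<in> S \<Longrightarrow> norm s = 1"
  obtains B where "S \<subseteq> B" "finite B" "pairwise orthogonal B" "\<And>x. x \<in> B \<Longrightarrow> norm x = 1"
    "span B = UNIV" "card B = DIM('a)"
proof -
  define W where "W = {y. \<forall>x \<in> S. orthogonal x y}"
  have "subspace W" unfolding W_def by (rule subspace_orthogonal_to_vectors)
  then obtain C where C: "C \<subseteq> W" "pairwise orthogonal C" "\<And>x. x \<in> C \<Longrightarrow> norm x = 1"
      "independent C" "span C = W"
    using orthonormal_basis_subspace by metis
  define B where "B = S \<union> C"
  have finB: "finite B" using finS C(4) independent_imp_finite B_def by blast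
  have B_orth: "pairwise orthogonal B"
    using S_orth C(1,2) unfolding B_def W_def pairwise_def
    by (blast dest: orthogonal_commute[THEN iffD1])
  have B_unit: "\<And>x. x \<in> B \<Longrightarrow> norm x = 1"
    unfolding B_def using S_unit C(3) by auto
  have spanB: "x \<in> span B" for x
  proof -
    have S_inner: "s \<bullet> s' = (if s = s' then 1 else 0)" if "s \<in> S" "s' \<in> S" for s s'
      using that S_orth S_unit by (auto simp: pairwise_def orthogonal_def norm_eq_1)
    define p where "p = (\<Sum>s\<in>S. (x \<bullet> s) *\<^sub>R s)"
    have "s' \<bullet> (x - p) = 0" if "s' \<in> S" for s'
      using that finS
      by (simp add: p_def inner_diff_right inner_sum_right S_inner inner_commute if_distrib
          cong: if_cong)
    then have "x - p \<in> span B"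
      using C(5) span_mono[of C B] unfolding B_def W_def orthogonal_def by blast
    moreover have "p \<in> span B"
      unfolding p_def by (intro span_sum span_mul span_base) (auto simp: B_def)
    ultimately show ?thesis using span_add by fastforce
  qed
  then have "span B = UNIV" by auto
  moreover have "card B = DIM('a)"
  proof -
    have "independent B"
      using B_orth B_unit by (metis norm_zero pairwise_orthogonal_independent zero_neq_one)
    then show ?thesis
      by (metis \<open>span B = UNIV\<close> dim_UNIV dim_eq_card_independent dim_span)
  qed
  ultimately show ?thesis
    using that finB B_orth B_unit unfolding B_def by blast
qed

lemma orthogonal_transformation_relabel_basis:
  fixes B :: "'a::euclidean_space set"
  assumes finB: "finite B" and B_orth: "pairwise orthogonal B" and B_unit: "\<And>x. x \<in> B \<Longrightarrow> norm x = 1"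
    and spanB: "span B = UNIV" and \<phi>: "bij_betw \<phi> B Basis"
  defines "T \<equiv> \<lambda>x. \<Sum>\<beta>\<in>B. (x \<bullet> \<beta>) *\<^sub>R \<phi> \<beta>"
  shows "orthogonal_transformation T" and "\<And>\<beta>. \<beta> \<in> B \<Longrightarrow> T \<beta> = \<phi> \<beta>"
proof -
  have B_inner: "\<beta> \<bullet> \<beta>' = (if \<beta> = \<beta>' then 1 else 0)" if "\<beta> \<in> B" "\<beta>' \<in> B" for \<beta> \<beta>'
    using that B_orth B_unit by (auto simp: pairwise_def orthogonal_def norm_eq_1)
  have \<phi>_inner: "\<phi> \<beta> \<bullet> \<phi> \<beta>' = (if \<beta> = \<beta>' then 1 else 0)" if "\<beta> \<in> B" "\<beta>' \<in> B" for \<beta> \<beta>'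
  proof -
    have "\<phi> \<beta> \<in> Basis" "\<phi> \<beta>' \<in> Basis" using that \<phi> bij_betwE by blast+
    moreover have "\<phi> \<beta> = \<phi> \<beta>' \<longleftrightarrow> \<beta> = \<beta>'" using that \<phi> by (auto simp: bij_betw_def inj_on_def)
    ultimately show ?thesis by (simp add: inner_Basis)
  qed
  have parseval: "x \<bullet> y = (\<Sum>\<beta>\<in>B. (x \<bullet> \<beta>) * (y \<bullet> \<beta>))" for x y
  proof -
    have "x \<bullet> y = x \<bullet> (\<Sum>\<beta>\<in>B. (y \<bullet> \<beta>) *\<^sub>R \<beta>)"
      using orthonormal_basis_expand[OF B_orth B_unit _ finB] spanB by simp
    then show ?thesis by (simp add: inner_sum_right mult.commute)
  qed
  have "T x \<bullet> T y = x \<bullet> y" for x y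
  proof -
    have "T x \<bullet> T y = (\<Sum>\<beta>\<in>B. \<Sum>\<beta>'\<in>B. y \<bullet> \<beta> * (x \<bullet> \<beta>' * (\<phi> \<beta>' \<bullet> \<phi> \<beta>)))"
      by (simp add: T_def inner_sum_left inner_sum_right sum_distrib_left mult.assoc)
    also have "\<dots> = (\<Sum>\<beta>\<in>B. (x \<bullet> \<beta>) * (y \<bullet> \<beta>))"
      by (intro sum.cong refl) (simp add: finB \<phi>_inner if_distrib cong: if_cong)
    also have "\<dots> = x \<bullet> y"
      by (rule parseval[symmetric])
    finally show ?thesis .
  qed
  moreover have "linear T"
    unfolding T_def
    by (rule linearI) (simp_all add: inner_add_left scaleR_add_left sum.distrib scaleR_sum_right)
  ultimately show "orthogonal_transformation T"
    unfolding orthogonal_transformation_def by blast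
  show "T \<beta> = \<phi> \<beta>" if "\<beta> \<in> B" for \<beta>
  proof -
    have "T \<beta> = (\<Sum>\<beta>'\<in>B. (if \<beta>' = \<beta> then \<phi> \<beta>' else 0))"
      unfolding T_def by (rule sum.cong) (use that B_inner inner_commute in auto)
    then show ?thesis using finB that by simp
  qed
qed

lemma orthonormal_family_to_Basis:
  fixes v :: "'j \<Rightarrow> 'a::euclidean_space"
  assumes J: "finite J" and inj: "inj_on v J"
    and orth: "\<And>i j. i \<in> J \<Longrightarrow> j \<in> J \<Longrightarrow> i \<noteq> j \<Longrightarrow> v i \<bullet> v j = 0"
    and unit: "\<And>j. j \<in> J \<Longrightarrow> norm (v j) = 1"
  obtains T :: "'a \<Rightarrow> 'a" and b where "orthogonal_transformation T" "inj_on b J"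
    "b ` J \<subseteq> Basis" "\<And>j. j \<in> J \<Longrightarrow> T (v j) = b j"
proof -
  have "pairwise orthogonal (v ` J)"
    using orth by (auto simp: pairwise_def orthogonal_def)
  then obtain B where B: "v ` J \<subseteq> B" "finite B" "pairwise orthogonal B"
    "\<And>x. x \<in> B \<Longrightarrow> norm x = 1" "span B = UNIV" "card B = DIM('a)"
    using orthonormal_extend_to_basis[of "v ` J"] J unit by blast
  obtain \<phi> :: "'a \<Rightarrow> 'a" where \<phi>: "bij_betw \<phi> B Basis"
    using finite_same_card_bij[OF B(2) finite_Basis[where 'a='a]] B(6) by auto
  note T = orthogonal_transformation_relabel_basis[OF B(2-5) \<phi>]
  show ?thesis
  proof (rule that[OF T(1)])
    show "inj_on (\<phi> \<circ> v) J"
      using inj by (rule comp_inj_on) (meson B(1) \<phi> bij_betw_def inj_on_subset)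
    show "(\<phi> \<circ> v) ` J \<subseteq> Basis"
      using B(1) \<phi> by (auto dest: bij_betwE)
    show "(\<Sum>\<beta>\<in>B. (v j \<bullet> \<beta>) *\<^sub>R \<phi> \<beta>) = (\<phi> \<circ> v) j" if "j \<in> J" for j
      using T(2) B(1) that by auto
  qed
qed

lemma distr_iso_normal_Basis_coordinates:
  fixes b :: "'j \<Rightarrow> 'a::euclidean_space"
  assumes \<sigma>: "\<sigma> > 0" and J: "finite J" and inj: "inj_on b J" and bB: "b ` J \<subseteq> Basis"
  shows "distr (iso_normal \<sigma>) (PiM J (\<lambda>_. borel)) (\<lambda>x. \<lambda>j\<in>J. x \<bullet> b j) =
    PiM J (\<lambda>_. normal_measure \<sigma>)"
proof -
  let ?F = "\<lambda>x. \<lambda>j\<in>J. x \<bullet> b j"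
  interpret prob_space "normal_measure \<sigma>" using prob_space_normal_measure[OF \<sigma>] .
  interpret P: product_sigma_finite "\<lambda>_. normal_measure \<sigma>"
    unfolding product_sigma_finite_def by (simp add: sigma_finite_measure_axioms)
  have F_meas: "?F \<in> measurable (iso_normal \<sigma>) (PiM J (\<lambda>_. borel))"
    by (auto intro!: measurable_restrict simp: measurable_cong_sets[OF sets_iso_normal refl])
  show ?thesis
  proof (rule P.PiM_eqI[OF J])
    show "sets (distr (iso_normal \<sigma>) (PiM J (\<lambda>_. borel)) ?F) = sets (PiM J (\<lambda>_. normal_measure \<sigma>))"
      by (simp cong: sets_PiM_cong)
    fix A assume "\<And>i. i \<in> J \<Longrightarrow> A i \<in> sets (normal_measure \<sigma>)"
    then have A: "\<And>i. i \<in> J \<Longrightarrow> A i \<in> sets borel" by simp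
    have "Pi\<^sub>E J A \<in> sets (PiM J (\<lambda>_. (borel :: real measure)))"
      using A by (intro sets_PiM_I_finite J) auto
    moreover have "?F -` Pi\<^sub>E J A \<inter> space (iso_normal \<sigma>) = {x. \<forall>j\<in>J. x \<bullet> b j \<in> A j}"
      by (auto simp: PiE_iff)
    ultimately show "emeasure (distr (iso_normal \<sigma>) (PiM J (\<lambda>_. borel)) ?F) (Pi\<^sub>E J A) =
        (\<Prod>j\<in>J. emeasure (normal_measure \<sigma>) (A j))"
      by (simp add: emeasure_distr[OF F_meas] emeasure_iso_normal_coordinates[OF \<sigma> J inj bB A])
  qed
qed

lemma distr_iso_normal_orthonormal_coordinates:
  fixes v :: "'j \<Rightarrow> (real, 'm::{finite,wellorder}) vec"
  assumes \<sigma>: "\<sigma> > 0" and J: "finite J"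
    and orth: "\<And>i j. i \<in> J \<Longrightarrow> j \<in> J \<Longrightarrow> i \<noteq> j \<Longrightarrow> v i \<bullet> v j = 0"
    and unit: "\<And>j. j \<in> J \<Longrightarrow> norm (v j) = 1"
  shows "distr (iso_normal \<sigma>) (PiM J (\<lambda>_. borel)) (\<lambda>x. \<lambda>j\<in>J. x \<bullet> v j) =
    PiM J (\<lambda>_. normal_measure \<sigma>)"
proof -
  have inj: "inj_on v J"
    by (rule inj_onI) (metis inner_eq_zero_iff norm_zero orth unit zero_neq_one)
  obtain T :: "(real, 'm) vec \<Rightarrow> (real, 'm) vec" and b where T: "orthogonal_transformation T"
    and b: "inj_on b J" "b ` J \<subseteq> Basis" and Tv: "\<And>j. j \<in> J \<Longrightarrow> T (v j) = b j"
    using orthonormal_family_to_Basis[OF J inj orth unit] by blast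
  have "x \<bullet> v j = T x \<bullet> b j" if "j \<in> J" for x j
    using Tv[OF that] T unfolding orthogonal_transformation_def by metis
  then have coords: "(\<lambda>x. \<lambda>j\<in>J. x \<bullet> v j) = (\<lambda>x. \<lambda>j\<in>J. x \<bullet> b j) \<circ> T"
    by (auto simp: fun_eq_iff)
  have T_meas: "T \<in> measurable (iso_normal \<sigma>) borel"
    using orthogonal_transformation_borel_measurable[OF T]
    by (simp add: measurable_cong_sets[OF sets_iso_normal refl])
  have "distr (iso_normal \<sigma>) (PiM J (\<lambda>_. borel)) (\<lambda>x. \<lambda>j\<in>J. x \<bullet> v j) =
      distr (distr (iso_normal \<sigma>) borel T) (PiM J (\<lambda>_. borel)) (\<lambda>x. \<lambda>j\<in>J. x \<bullet> b j)"
    unfolding coords by (rule distr_distr[symmetric]) (auto intro!: measurable_restrict T_meas)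
  also have "\<dots> = PiM J (\<lambda>_. normal_measure \<sigma>)"
    unfolding distr_iso_normal_orthogonal_transformation[OF T]
    by (rule distr_iso_normal_Basis_coordinates[OF \<sigma> J b])
  finally show ?thesis .
qed

section \<open>Complex Gaussian vectors as real Gaussian vectors\<close>

definition stack_pair :: "('n::finite \<Rightarrow> real) \<times> ('n \<Rightarrow> real) \<Rightarrow> (real, ('n \<times> bool) ordered_copy) vec"
  where "stack_pair p =
    (\<chi> k. case Rep_ordered_copy k of (i, c) \<Rightarrow> if c then fst p i else snd p i)"

lemma stack_pair_nth: "stack_pair p $ Abs_ordered_copy (i, c) = (if c then fst p i else snd p i)"
  by (simp add: stack_pair_def Abs_ordered_copy_inverse)

lemma prod_UNIV_pair_bool:
  fixes f :: "'n::finite \<times> bool \<Rightarrow> 'b::comm_monoid_mult"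
  shows "(\<Prod>j\<in>UNIV. f j) = (\<Prod>i\<in>UNIV. f (i, True)) * (\<Prod>i\<in>UNIV. f (i, False))"
proof -
  have "(\<Prod>j\<in>UNIV. f j) = (\<Prod>i\<in>UNIV. \<Prod>c\<in>UNIV. f (i, c))"
    using prod.cartesian_product[of "\<lambda>i c. f (i, c)" UNIV UNIV] by simp
  then show ?thesis by (simp add: UNIV_bool prod.distrib mult.commute)
qed

lemma measurable_stack_pair:
  assumes sets_M: "sets M = sets (borel :: real measure)"
  shows "stack_pair \<in> measurable (PiM UNIV (\<lambda>_::'n::finite. M) \<Otimes>\<^sub>M PiM UNIV (\<lambda>_. M)) borel"
proof -
  let ?\<Omega> = "PiM UNIV (\<lambda>_::'n. M) \<Otimes>\<^sub>M PiM UNIV (\<lambda>_. M)"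
  have M_borel: "measurable ?\<Omega> M = borel_measurable ?\<Omega>"
    by (rule measurable_cong_sets[OF refl sets_M])
  have "(\<lambda>p. stack_pair p \<bullet> i) \<in> borel_measurable ?\<Omega>" if i: "i \<in> Basis" for i
  proof -
    obtain k where k: "i = axis k 1" using i by (auto simp: Basis_vec_def)
    obtain j c where jc: "k = Abs_ordered_copy (j, c)"
      by (metis Rep_ordered_copy_inverse surj_pair)
    have "(\<lambda>p. stack_pair p \<bullet> i) = (\<lambda>p. if c then fst p j else snd p j)"
      by (simp add: k jc cart_eq_inner_axis[symmetric] stack_pair_nth)
    moreover have "(\<lambda>p. fst p j) \<in> measurable ?\<Omega> M" "(\<lambda>p. snd p j) \<in> measurable ?\<Omega> M"
      by measurable
    ultimately show ?thesis
      unfolding M_borel by (cases c) simp_all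
  qed
  then show ?thesis
    by (simp add: borel_measurable_euclidean_space[of stack_pair])
qed

lemma emeasure_distr_stack_pair_box:
  assumes \<sigma>: "\<sigma> > 0"
  shows "emeasure (distr (PiM UNIV (\<lambda>_::'n::finite. normal_measure \<sigma>) \<Otimes>\<^sub>M
      PiM UNIV (\<lambda>_. normal_measure \<sigma>)) borel stack_pair) (box a b) = emeasure (iso_normal \<sigma>) (box a b)"
proof -
  let ?G = "PiM UNIV (\<lambda>_::'n. normal_measure \<sigma>)"
  interpret N: prob_space "normal_measure \<sigma>" using prob_space_normal_measure[OF \<sigma>] .
  interpret P: product_prob_space "\<lambda>_::'n. normal_measure \<sigma>" ..
  interpret G: prob_space ?G by (rule prob_space_PiM) (rule N.prob_space_axioms)
  define I where "I j = {a $ Abs_ordered_copy j <..< b $ Abs_ordered_copy j}" for j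
  define e where "e j = (axis (Abs_ordered_copy j) 1 :: (real, ('n \<times> bool) ordered_copy) vec)" for j
  have I: "I j \<in> sets borel" for j unfolding I_def by simp
  have box: "x \<in> box a b \<longleftrightarrow> (\<forall>j. x $ Abs_ordered_copy j \<in> I j)" for x
    unfolding mem_box_cart I_def by (metis Rep_ordered_copy_inverse greaterThanLessThan_iff)
  have "stack_pair -` box a b \<inter> space (?G \<Otimes>\<^sub>M ?G) =
      (Pi\<^sub>E UNIV (\<lambda>i. I (i, True))) \<times> (Pi\<^sub>E UNIV (\<lambda>i. I (i, False)))"
    by (auto simp: box stack_pair_nth space_pair_measure space_PiM PiE_iff) (metis fst_conv snd_conv)+
  then have "emeasure (distr (?G \<Otimes>\<^sub>M ?G) borel stack_pair) (box a b) =
      emeasure ?G (Pi\<^sub>E UNIV (\<lambda>i. I (i, True))) * emeasure ?G (Pi\<^sub>E UNIV (\<lambda>i. I (i, False)))"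
    by (simp add: emeasure_distr measurable_stack_pair G.emeasure_pair_measure_Times
        sets_PiM_I_finite I)
  also have "\<dots> = (\<Prod>j\<in>UNIV. emeasure (normal_measure \<sigma>) (I j))"
    by (simp add: P.emeasure_PiM I prod_UNIV_pair_bool)
  also have "\<dots> = emeasure (iso_normal \<sigma>) {x. \<forall>j\<in>UNIV. x \<bullet> e j \<in> I j}"
    by (rule emeasure_iso_normal_coordinates[OF \<sigma>, symmetric])
      (auto simp: inj_on_def axis_eq_axis Abs_ordered_copy_inject e_def Basis_vec_def I)
  also have "{x. \<forall>j\<in>UNIV. x \<bullet> e j \<in> I j} = box a b"
    by (auto simp: box cart_eq_inner_axis[symmetric] e_def)
  finally show ?thesis .
qed

lemma distr_stack_pair:
  assumes \<sigma>: "\<sigma> > 0"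
  shows "distr (PiM UNIV (\<lambda>_::'n::finite. normal_measure \<sigma>) \<Otimes>\<^sub>M PiM UNIV (\<lambda>_. normal_measure \<sigma>))
    borel stack_pair = iso_normal \<sigma>"
proof -
  let ?G = "PiM UNIV (\<lambda>_::'n. normal_measure \<sigma>)"
  let ?M = "distr (?G \<Otimes>\<^sub>M ?G) borel stack_pair"
  let ?E = "range (\<lambda>(a, b). box a b :: (real, ('n \<times> bool) ordered_copy) vec set)"
  interpret N: prob_space "normal_measure \<sigma>" using prob_space_normal_measure[OF \<sigma>] .
  interpret G: prob_space ?G by (rule prob_space_PiM) (rule N.prob_space_axioms)
  interpret GG: pair_prob_space ?G ?G ..
  interpret M: prob_space ?M
    by (rule GG.prob_space_distr) (simp add: measurable_stack_pair)
  show ?thesis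
  proof (rule measure_eqI_generator_eq[where \<Omega>=UNIV and E="?E"
        and A="\<lambda>n. box (- (real n *\<^sub>R One)) (real n *\<^sub>R One)"])
    show "Int_stable ?E" by (auto simp: Int_stable_def box_Int_box)
    show "sets ?M = sigma_sets UNIV ?E" "sets (iso_normal \<sigma>) = sigma_sets UNIV ?E"
      by (simp_all add: borel_eq_box)
    show "(\<Union>n. box (- (real n *\<^sub>R One)) (real n *\<^sub>R One)) =
        (UNIV :: (real, ('n \<times> bool) ordered_copy) vec set)"
      by (rule UN_box_eq_UNIV)
    show "X \<in> ?E \<Longrightarrow> emeasure ?M X = emeasure (iso_normal \<sigma>) X" for X
      using emeasure_distr_stack_pair_box[OF \<sigma>] by auto
  qed auto
qed

lemma cdot_add_right: "cdot x (y + z) = cdot x y + cdot x z"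
  by (simp add: cdot_def distrib_left sum.distrib)

lemma cdot_diff_right: "cdot x (y - z) = cdot x y - cdot x z"
  by (simp add: cdot_def right_diff_distrib sum_subtractf)

lemma cdot_add_left: "cdot (x + y) z = cdot x z + cdot y z"
  by (simp add: cdot_def distrib_right sum.distrib)

lemma cdot_diff_left: "cdot (x - y) z = cdot x z - cdot y z"
  by (simp add: cdot_def left_diff_distrib sum_subtractf)

lemma cdot_scale_right: "cdot x (c *s y) = c * cdot x y"
  by (simp add: cdot_def sum_distrib_left mult_ac)

lemma cdot_scale_left: "cdot (c *s x) y = cnj c * cdot x y"
  by (simp add: cdot_def sum_distrib_left mult_ac)

lemma cdot_commute: "cdot y x = cnj (cdot x y)"
  by (simp add: cdot_def mult.commute)

lemma cdot_zero_right[simp]: "cdot x 0 = 0"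
  by (simp add: cdot_def)

lemma cdot_self: "cdot y y = complex_of_real ((norm y)\<^sup>2)"
proof -
  have "cdot y y = (\<Sum>i\<in>UNIV. complex_of_real ((cmod (y $ i))\<^sup>2))"
    unfolding cdot_def
    by (rule sum.cong) (simp_all, metis complex_norm_square of_real_power mult.commute)
  also have "\<dots> = complex_of_real ((norm y)\<^sup>2)"
    unfolding norm_vec_def L2_set_def by (simp add: sum_nonneg)
  finally show ?thesis .
qed

text \<open>Real vectors of \<open>\<real>\<^sup>2\<^sup>N\<close> whose inner products with the stacked vector \<open>(g, g')\<close> are the
  real and imaginary parts of \<open>a\<^sup>* y\<close>, where \<open>a = g + \<i> g'\<close>.\<close>

definition re_dual :: "complex ^ 'n \<Rightarrow> (real, ('n::finite \<times> bool) ordered_copy) vec" where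
  "re_dual y = (\<chi> k. case Rep_ordered_copy k of (i, c) \<Rightarrow> if c then Re (y $ i) else Im (y $ i))"

definition im_dual :: "complex ^ 'n \<Rightarrow> (real, ('n::finite \<times> bool) ordered_copy) vec" where
  "im_dual y = (\<chi> k. case Rep_ordered_copy k of (i, c) \<Rightarrow> if c then Im (y $ i) else - Re (y $ i))"

lemma re_dual_nth: "re_dual y $ Abs_ordered_copy (i, c) = (if c then Re (y $ i) else Im (y $ i))"
  by (simp add: re_dual_def Abs_ordered_copy_inverse)

lemma im_dual_nth: "im_dual y $ Abs_ordered_copy (i, c) = (if c then Im (y $ i) else - Re (y $ i))"
  by (simp add: im_dual_def Abs_ordered_copy_inverse)

lemma sum_UNIV_ordered_copy_pair_bool:
  fixes f :: "('n::finite \<times> bool) ordered_copy \<Rightarrow> 'b::comm_monoid_add"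
  shows "(\<Sum>k\<in>UNIV. f k) =
    (\<Sum>i\<in>UNIV. f (Abs_ordered_copy (i, True)) + f (Abs_ordered_copy (i, False)))"
proof -
  have "(\<Sum>k\<in>UNIV. f k) = (\<Sum>j\<in>UNIV. f (Abs_ordered_copy j))"
    by (rule sum.reindex_bij_betw[symmetric])
      (rule bij_betwI[where g=Rep_ordered_copy],
        auto simp: Abs_ordered_copy_inverse Rep_ordered_copy_inverse)
  also have "\<dots> = (\<Sum>i\<in>UNIV. \<Sum>c\<in>UNIV. f (Abs_ordered_copy (i, c)))"
    using sum.cartesian_product[of "\<lambda>i c. f (Abs_ordered_copy (i, c))" UNIV UNIV] by simp
  finally show ?thesis by (simp add: UNIV_bool add.commute)
qed

lemma inner_ordered_copy_pair_bool:
  "(x :: (real, ('n::finite \<times> bool) ordered_copy) vec) \<bullet> y =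
    (\<Sum>i\<in>UNIV. x $ Abs_ordered_copy (i, True) * y $ Abs_ordered_copy (i, True) +
      x $ Abs_ordered_copy (i, False) * y $ Abs_ordered_copy (i, False))"
  unfolding inner_vec_def by (simp add: sum_UNIV_ordered_copy_pair_bool)

lemma stack_pair_inner_re_dual: "stack_pair (g, g') \<bullet> re_dual y = Re (cdot (avec g g') y)"
  by (simp add: inner_ordered_copy_pair_bool stack_pair_nth re_dual_nth cdot_def avec_def Re_sum)

lemma stack_pair_inner_im_dual: "stack_pair (g, g') \<bullet> im_dual y = Im (cdot (avec g g') y)"
  by (simp add: inner_ordered_copy_pair_bool stack_pair_nth im_dual_nth cdot_def avec_def Im_sum
      algebra_simps sum_subtractf)

lemma re_dual_inner_re_dual: "re_dual y \<bullet> re_dual z = Re (cdot y z)"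
  by (simp add: inner_ordered_copy_pair_bool re_dual_nth cdot_def Re_sum)

lemma im_dual_inner_im_dual: "im_dual y \<bullet> im_dual z = Re (cdot y z)"
  by (simp add: inner_ordered_copy_pair_bool im_dual_nth cdot_def Re_sum add.commute)

lemma re_dual_inner_im_dual: "re_dual y \<bullet> im_dual z = Im (cdot y z)"
  by (simp add: inner_ordered_copy_pair_bool re_dual_nth im_dual_nth cdot_def Im_sum algebra_simps)

lemma im_dual_inner_re_dual: "im_dual y \<bullet> re_dual z = - Im (cdot y z)"
  by (simp add: inner_ordered_copy_pair_bool re_dual_nth im_dual_nth cdot_def Im_sum
      algebra_simps sum_negf[symmetric])

lemma norm_re_dual: "norm (re_dual y) = norm y"
  using re_dual_inner_re_dual[of y y] cdot_self[of y]
  by (simp add: norm_eq_sqrt_inner)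

lemma norm_im_dual: "norm (im_dual y) = norm y"
  using im_dual_inner_im_dual[of y y] cdot_self[of y]
  by (simp add: norm_eq_sqrt_inner)

lemma cmod_cdot_avec_sq:
  "(cmod (cdot (avec g g') y))\<^sup>2 = (stack_pair (g, g') \<bullet> re_dual y)\<^sup>2 + (stack_pair (g, g') \<bullet> im_dual y)\<^sup>2"
  by (simp add: cmod_power2 stack_pair_inner_re_dual stack_pair_inner_im_dual)

lemma emeasure_stack_pair_orthonormal:
  fixes v :: "'j \<Rightarrow> (real, ('n::finite \<times> bool) ordered_copy) vec"
  assumes \<sigma>: "\<sigma> > 0" and J: "finite J"
    and orth: "\<And>i j. i \<in> J \<Longrightarrow> j \<in> J \<Longrightarrow> i \<noteq> j \<Longrightarrow> v i \<bullet> v j = 0"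
    and unit: "\<And>j. j \<in> J \<Longrightarrow> norm (v j) = 1"
    and P: "{z \<in> space (PiM J (\<lambda>_. normal_measure \<sigma>)). P z} \<in> sets (PiM J (\<lambda>_. normal_measure \<sigma>))"
  shows "emeasure (PiM UNIV (\<lambda>_::'n. normal_measure \<sigma>) \<Otimes>\<^sub>M PiM UNIV (\<lambda>_. normal_measure \<sigma>))
      {p. P (\<lambda>j\<in>J. stack_pair p \<bullet> v j)} =
    emeasure (PiM J (\<lambda>_. normal_measure \<sigma>)) {z \<in> space (PiM J (\<lambda>_. normal_measure \<sigma>)). P z}"
proof -
  let ?\<Omega> = "PiM UNIV (\<lambda>_::'n. normal_measure \<sigma>) \<Otimes>\<^sub>M PiM UNIV (\<lambda>_. normal_measure \<sigma>)"
  let ?L = "\<lambda>x. \<lambda>j\<in>J. x \<bullet> v j"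
  let ?T = "{z \<in> space (PiM J (\<lambda>_. normal_measure \<sigma>)). P z}"
  have stack_meas: "stack_pair \<in> measurable ?\<Omega> borel"
    by (rule measurable_stack_pair) simp
  have L_meas: "?L \<in> measurable borel (PiM J (\<lambda>_. borel))"
    by (auto intro!: measurable_restrict)
  have "distr ?\<Omega> (PiM J (\<lambda>_. borel)) (?L \<circ> stack_pair) =
      distr (distr ?\<Omega> borel stack_pair) (PiM J (\<lambda>_. borel)) ?L"
    by (rule distr_distr[OF L_meas stack_meas, symmetric])
  also have "\<dots> = PiM J (\<lambda>_. normal_measure \<sigma>)"
    unfolding distr_stack_pair[OF \<sigma>]
    by (rule distr_iso_normal_orthonormal_coordinates[OF \<sigma> J orth unit])
  finally have distr_eq: "distr ?\<Omega> (PiM J (\<lambda>_. borel)) (?L \<circ> stack_pair) = PiM J (\<lambda>_. normal_measure \<sigma>)" .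
  have "?T \<in> sets (PiM J (\<lambda>_. borel))"
    using P by (simp cong: sets_PiM_cong)
  then have "emeasure (PiM J (\<lambda>_. normal_measure \<sigma>)) ?T =
      emeasure ?\<Omega> ((?L \<circ> stack_pair) -` ?T \<inter> space ?\<Omega>)"
    unfolding distr_eq[symmetric] by (rule emeasure_distr[OF measurable_comp[OF stack_meas L_meas]])
  also have "(?L \<circ> stack_pair) -` ?T \<inter> space ?\<Omega> = {p. P (\<lambda>j\<in>J. stack_pair p \<bullet> v j)}"
    by (auto simp: space_pair_measure space_PiM PiE_iff)
  finally show ?thesis by simp
qed

section \<open>Tail probabilities of standard complex Gaussians\<close>

lemma nn_integral_lborel_even:
  fixes g :: "real \<Rightarrow> ennreal"
  assumes [measurable]: "g \<in> borel_measurable borel" and even: "\<And>x. g (- x) = g x"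
  shows "(\<integral>\<^sup>+x. g x \<partial>lborel) = 2 * (\<integral>\<^sup>+x. g x * indicator {0..} x \<partial>lborel)"
proof -
  have "(\<integral>\<^sup>+x. g x \<partial>lborel) = (\<integral>\<^sup>+x. g x * indicator {0..} x + g x * indicator {..<0} x \<partial>lborel)"
    by (rule nn_integral_cong) (auto split: split_indicator)
  also have "\<dots> = (\<integral>\<^sup>+x. g x * indicator {0..} x \<partial>lborel) + (\<integral>\<^sup>+x. g x * indicator {..<0} x \<partial>lborel)"
    by (rule nn_integral_add) auto
  also have "(\<integral>\<^sup>+x. g x * indicator {..<0} x \<partial>lborel) = (\<integral>\<^sup>+x. g (- x) * indicator {..<0} (- x) \<partial>lborel)"
    using nn_integral_real_affine[of "\<lambda>x. g x * indicator {..<0} x" "-1" 0] by simp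
  also have "\<dots> = (\<integral>\<^sup>+x. g x * indicator {0..} x \<partial>lborel)"
    using AE_lborel_singleton[of 0]
    by (intro nn_integral_cong_AE) (auto simp: even split: split_indicator)
  finally show ?thesis by (simp add: mult_2)
qed

lemma nn_integral_inverse_one_plus_square: "(\<integral>\<^sup>+s. ennreal (1 / (1 + s\<^sup>2)) \<partial>lborel) = ennreal pi"
proof -
  have "(\<integral>\<^sup>+s. ennreal (1 / (1 + s\<^sup>2)) * indicator {0..} s \<partial>lborel) = ennreal (pi / 2 - arctan 0)"
    by (rule nn_integral_FTC_atLeast[OF _ _ _ tendsto_arctan_at_top])
      (auto intro!: derivative_eq_intros simp: add_nonneg_eq_0_iff field_simps power2_eq_square)
  then show ?thesis
    by (subst nn_integral_lborel_even) (auto simp: numeral_mult_ennreal)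
qed

lemma nn_integral_abs_mult_gaussian_tail:
  fixes a r :: real
  assumes a: "a > 0" and r: "r \<ge> 0"
  shows "(\<integral>\<^sup>+x. ennreal (\<bar>x\<bar> * exp (- (a * x\<^sup>2))) * indicator {x. r < a * x\<^sup>2} x \<partial>lborel) =
    ennreal (exp (- r) / a)"
proof -
  define c where "c = sqrt (r / a)"
  have c: "c \<ge> 0" "a * c\<^sup>2 = r" using a r by (auto simp: c_def)
  have tail_iff: "r < a * x\<^sup>2 \<and> 0 \<le> x \<longleftrightarrow> c \<le> x" if "x \<noteq> c" for x
  proof -
    have "r < a * x\<^sup>2 \<longleftrightarrow> c\<^sup>2 < x\<^sup>2" unfolding c(2)[symmetric] using a by simp
    also have "\<dots> \<longleftrightarrow> c < \<bar>x\<bar>" using c(1) abs_le_square_iff[of x c] by auto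
    finally show ?thesis using that c by auto
  qed
  have "(\<integral>\<^sup>+x. ennreal (\<bar>x\<bar> * exp (- (a * x\<^sup>2))) * indicator {x. r < a * x\<^sup>2} x * indicator {0..} x \<partial>lborel)
      = (\<integral>\<^sup>+x. ennreal (x * exp (- (a * x\<^sup>2))) * indicator {c..} x \<partial>lborel)"
    using AE_lborel_singleton[of c]
    by (intro nn_integral_cong_AE) (auto simp: tail_iff[symmetric] split: split_indicator)
  also have "\<dots> = ennreal (0 - (- exp (- (a * c\<^sup>2)) / (2 * a)))"
  proof (rule nn_integral_FTC_atLeast)
    fix x assume "c \<le> x"
    show "((\<lambda>x. - exp (- (a * x\<^sup>2)) / (2 * a)) has_real_derivative x * exp (- (a * x\<^sup>2))) (at x)"
      using a by (auto intro!: derivative_eq_intros simp: field_simps)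
    show "0 \<le> x * exp (- (a * x\<^sup>2))" using \<open>c \<le> x\<close> c by simp
  next
    have "filterlim (\<lambda>x. a * x\<^sup>2) at_top at_top"
      using a by (intro filterlim_tendsto_pos_mult_at_top[OF tendsto_const] filterlim_pow_at_top
          filterlim_ident) auto
    then have "filterlim (\<lambda>x. - (a * x\<^sup>2)) at_bot at_top"
      by (simp add: filterlim_uminus_at_bot)
    then have "((\<lambda>x. - exp (- (a * x\<^sup>2)) / (2 * a)) \<longlongrightarrow> - 0 / (2 * a)) at_top"
      using a by (intro tendsto_intros filterlim_compose[OF exp_at_bot]) auto
    then show "((\<lambda>x. - exp (- (a * x\<^sup>2)) / (2 * a)) \<longlongrightarrow> 0) at_top" by simp
  qed simp
  finally show ?thesis
    using c a by (subst nn_integral_lborel_even) (auto simp: numeral_mult_ennreal split: split_indicator)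
qed

text \<open>Substituting \<open>y = x s\<close> in the inner integral turns the exterior of a disc into
  a family of one-dimensional tails, one for each slope \<open>s\<close>.\<close>

lemma nn_integral_gaussian_disc_complement:
  fixes r :: real assumes r: "r \<ge> 0"
  shows "(\<integral>\<^sup>+x. \<integral>\<^sup>+y. ennreal (exp (- (x\<^sup>2 + y\<^sup>2))) * indicator {y. r < x\<^sup>2 + y\<^sup>2} y \<partial>lborel \<partial>lborel)
      = ennreal (pi * exp (- r))"
proof -
  let ?h = "\<lambda>x y. ennreal (exp (- (x\<^sup>2 + y\<^sup>2))) * indicator {y. r < x\<^sup>2 + y\<^sup>2} y"
  let ?k = "\<lambda>x s. ennreal (\<bar>x\<bar> * exp (- ((1 + s\<^sup>2) * x\<^sup>2))) * indicator {x. r < (1 + s\<^sup>2) * x\<^sup>2} x"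
  have "(\<integral>\<^sup>+y. ?h x y \<partial>lborel) = (\<integral>\<^sup>+s. ?k x s \<partial>lborel)" if x: "x \<noteq> 0" for x :: real
  proof -
    have "(\<integral>\<^sup>+y. ?h x y \<partial>lborel) = ennreal \<bar>x\<bar> * (\<integral>\<^sup>+s. ?h x (0 + x * s) \<partial>lborel)"
      by (rule nn_integral_real_affine) (use x in auto)
    also have "\<dots> = (\<integral>\<^sup>+s. ennreal \<bar>x\<bar> * ?h x (x * s) \<partial>lborel)"
      by (simp add: nn_integral_cmult)
    also have "\<dots> = (\<integral>\<^sup>+s. ?k x s \<partial>lborel)"
    proof (rule nn_integral_cong)
      fix s :: real
      have "x\<^sup>2 + (x * s)\<^sup>2 = (1 + s\<^sup>2) * x\<^sup>2" by (simp add: power_mult_distrib algebra_simps)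
      then show "ennreal \<bar>x\<bar> * ?h x (x * s) = ?k x s"
        by (simp add: ennreal_mult[symmetric] split: split_indicator)
    qed
    finally show ?thesis .
  qed
  then have "(\<integral>\<^sup>+x. \<integral>\<^sup>+y. ?h x y \<partial>lborel \<partial>lborel) = (\<integral>\<^sup>+x. \<integral>\<^sup>+s. ?k x s \<partial>lborel \<partial>lborel)"
    using AE_lborel_singleton[of 0] by (intro nn_integral_cong_AE) auto
  also have "\<dots> = (\<integral>\<^sup>+s. \<integral>\<^sup>+x. ?k x s \<partial>lborel \<partial>lborel)"
    by (rule lborel_pair.Fubini') simp
  also have "\<dots> = (\<integral>\<^sup>+s. ennreal (exp (- r)) * ennreal (1 / (1 + s\<^sup>2)) \<partial>lborel)"
  proof (rule nn_integral_cong)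
    fix s :: real
    have "1 + s\<^sup>2 > 0" by (simp add: add_pos_nonneg)
    then show "(\<integral>\<^sup>+x. ?k x s \<partial>lborel) = ennreal (exp (- r)) * ennreal (1 / (1 + s\<^sup>2))"
      using nn_integral_abs_mult_gaussian_tail[OF _ r] by (simp add: divide_inverse ennreal_mult)
  qed
  also have "\<dots> = ennreal (exp (- r)) * ennreal pi"
    by (simp add: nn_integral_cmult nn_integral_inverse_one_plus_square)
  finally show ?thesis by (simp add: ennreal_mult[symmetric] mult.commute)
qed

lemma normal_density_sqrt_half: "normal_density 0 (sqrt (1/2)) x = exp (- x\<^sup>2) / sqrt pi"
  by (simp add: normal_density_def power2_eq_square real_sqrt_mult)

lemma emeasure_normal_pair_sum_sq_greater:
  fixes r :: real assumes r: "r \<ge> 0"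
  shows "emeasure (normal_measure (sqrt (1/2)) \<Otimes>\<^sub>M normal_measure (sqrt (1/2)))
    {p. r < (fst p)\<^sup>2 + (snd p)\<^sup>2} = ennreal (exp (- r))"
proof -
  let ?N = "normal_measure (sqrt (1/2))"
  interpret N: prob_space ?N by (rule prob_space_normal_measure) simp
  let ?c = "1 / sqrt pi"
  have "{p \<in> space (borel \<Otimes>\<^sub>M (borel :: real measure)). r < (fst p)\<^sup>2 + (snd p)\<^sup>2} \<in>
      sets (borel \<Otimes>\<^sub>M borel)"
    by measurable
  then have event: "{p. r < (fst p)\<^sup>2 + (snd p)\<^sup>2} \<in> sets (?N \<Otimes>\<^sub>M ?N)"
    by (simp add: sets_pair_measure_cong[OF sets_normal_measure sets_normal_measure]
        space_pair_measure)
  have density_prod: "ennreal (?c * exp (- x\<^sup>2)) * (ennreal (?c * exp (- y\<^sup>2)) * i) =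
      ennreal (?c * ?c) * (ennreal (exp (- (x\<^sup>2 + y\<^sup>2))) * i)" for x y :: real and i
    by (simp add: exp_add[symmetric] ennreal_mult[symmetric] mult_ac)
  have "emeasure (?N \<Otimes>\<^sub>M ?N) {p. r < (fst p)\<^sup>2 + (snd p)\<^sup>2} =
      (\<integral>\<^sup>+x. emeasure ?N (Pair x -` {p. r < (fst p)\<^sup>2 + (snd p)\<^sup>2}) \<partial>?N)"
    by (rule N.emeasure_pair_measure_alt[OF event])
  also have "\<dots> = (\<integral>\<^sup>+x. ennreal (?c * exp (- x\<^sup>2)) *
      (\<integral>\<^sup>+y. ennreal (?c * exp (- y\<^sup>2)) * indicator {y. r < x\<^sup>2 + y\<^sup>2} y \<partial>lborel) \<partial>lborel)"
    unfolding normal_measure_def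
    by (simp add: nn_integral_density emeasure_density normal_density_sqrt_half vimage_def)
  also have "\<dots> = (\<integral>\<^sup>+x. ennreal (?c * ?c) *
      (\<integral>\<^sup>+y. ennreal (exp (- (x\<^sup>2 + y\<^sup>2))) * indicator {y. r < x\<^sup>2 + y\<^sup>2} y \<partial>lborel) \<partial>lborel)"
  proof (rule nn_integral_cong)
    fix x :: real
    let ?S = "{y. r < x\<^sup>2 + y\<^sup>2}"
    have "ennreal (?c * exp (- x\<^sup>2)) * (\<integral>\<^sup>+y. ennreal (?c * exp (- y\<^sup>2)) * indicator ?S y \<partial>lborel)
        = (\<integral>\<^sup>+y. ennreal (?c * exp (- x\<^sup>2)) * (ennreal (?c * exp (- y\<^sup>2)) * indicator ?S y) \<partial>lborel)"
      by (simp add: nn_integral_cmult)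
    also have "\<dots> = (\<integral>\<^sup>+y. ennreal (?c * ?c) * (ennreal (exp (- (x\<^sup>2 + y\<^sup>2))) * indicator ?S y) \<partial>lborel)"
      by (simp only: density_prod)
    also have "\<dots> = ennreal (?c * ?c) * (\<integral>\<^sup>+y. ennreal (exp (- (x\<^sup>2 + y\<^sup>2))) * indicator ?S y \<partial>lborel)"
      by (simp add: nn_integral_cmult)
    finally show "ennreal (?c * exp (- x\<^sup>2)) * (\<integral>\<^sup>+y. ennreal (?c * exp (- y\<^sup>2)) * indicator ?S y \<partial>lborel)
        = ennreal (?c * ?c) * (\<integral>\<^sup>+y. ennreal (exp (- (x\<^sup>2 + y\<^sup>2))) * indicator ?S y \<partial>lborel)" .
  qed
  also have "\<dots> = ennreal (?c * ?c) * ennreal (pi * exp (- r))"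
    using nn_integral_gaussian_disc_complement[OF r] by (simp add: nn_integral_cmult)
  also have "\<dots> = ennreal (exp (- r))"
    by (simp add: ennreal_mult[symmetric])
  finally show ?thesis .
qed

lemma nn_integral_normal_exp_neg_sq:
  fixes l :: real assumes l: "l \<ge> 0"
  shows "(\<integral>\<^sup>+z. ennreal (exp (- l * z\<^sup>2)) \<partial>normal_measure (sqrt (1/2))) = ennreal (1 / sqrt (1 + l))"
proof -
  define q where "q = 1 + l"
  define s where "s = sqrt (1 / (2 * q))"
  have q: "q > 0" and s: "s > 0" using l by (simp_all add: q_def s_def)
  have density: "exp (- z\<^sup>2) / sqrt pi * exp (- l * z\<^sup>2) = normal_density 0 s z * (1 / sqrt q)" for z
  proof -
    have "2 * s\<^sup>2 = 1 / q" "2 * pi * s\<^sup>2 = pi / q" using q by (simp_all add: s_def)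
    then have "normal_density 0 s z * (1 / sqrt q) = exp (- (q * z\<^sup>2)) / (sqrt (pi / q) * sqrt q)"
      using q unfolding normal_density_def by simp
    also have "\<dots> = exp (- (q * z\<^sup>2)) / sqrt pi"
      using q by (simp add: real_sqrt_divide)
    also have "\<dots> = exp (- z\<^sup>2) / sqrt pi * exp (- l * z\<^sup>2)"
      by (simp add: exp_add[symmetric] q_def algebra_simps)
    finally show ?thesis ..
  qed
  have "(\<integral>\<^sup>+z. ennreal (exp (- l * z\<^sup>2)) \<partial>normal_measure (sqrt (1/2))) =
      (\<integral>\<^sup>+z. ennreal (exp (- z\<^sup>2) / sqrt pi * exp (- l * z\<^sup>2)) \<partial>lborel)"
    unfolding normal_measure_def
    by (simp add: nn_integral_density normal_density_sqrt_half ennreal_mult[symmetric])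
  also have "\<dots> = (\<integral>\<^sup>+z. ennreal (normal_density 0 s z * (1 / sqrt q)) \<partial>lborel)"
    by (simp only: density)
  also have "\<dots> = (\<integral>\<^sup>+z. ennreal (normal_density 0 s z) \<partial>lborel) * ennreal (1 / sqrt q)"
  proof -
    have "0 \<le> 1 / sqrt q" using q by simp
    then show ?thesis
      by (simp only: ennreal_mult'') (rule nn_integral_multc, simp)
  qed
  also have "(\<integral>\<^sup>+z. ennreal (normal_density 0 s z) \<partial>lborel) = 1"
  proof -
    interpret prob_space "density lborel (normal_density 0 s)"
      by (rule prob_space_normal_density[OF s])
    show ?thesis using emeasure_space_1 by (simp add: emeasure_density)
  qed
  finally show ?thesis by (simp add: q_def)
qed

lemma measurable_normal_measure: "measurable (normal_measure \<sigma>) M = measurable borel M"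
  by (rule measurable_cong_sets) simp_all

lemma borel_measurable_component_normal_measure:
  "i \<in> K \<Longrightarrow> (\<lambda>x. x i) \<in> borel_measurable (PiM K (\<lambda>_. normal_measure \<sigma>))"
proof -
  assume "i \<in> K"
  then have "(\<lambda>x. x i) \<in> measurable (PiM K (\<lambda>_. normal_measure \<sigma>)) (normal_measure \<sigma>)"
    by (rule measurable_component_singleton)
  moreover have "measurable (PiM K (\<lambda>_. normal_measure \<sigma>)) (normal_measure \<sigma>) =
      borel_measurable (PiM K (\<lambda>_. normal_measure \<sigma>))"
    by (rule measurable_cong_sets) simp_all
  ultimately show ?thesis by simp
qed

lemma emeasure_PiM_sum_sq_greater:
  fixes A C :: real assumes A: "A > 0" and C: "C \<ge> 0" and ij: "i \<noteq> j"
  shows "emeasure (PiM {i, j} (\<lambda>_. normal_measure (sqrt (1/2))))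
      {z \<in> space (PiM {i, j} (\<lambda>_. normal_measure (sqrt (1/2)))). C < A * ((z i)\<^sup>2 + (z j)\<^sup>2)} =
    ennreal (exp (- (C / A)))"
proof -
  let ?N = "normal_measure (sqrt (1/2))"
  let ?S = "{z \<in> space (PiM {i, j} (\<lambda>_. ?N)). C < A * ((z i)\<^sup>2 + (z j)\<^sup>2)}"
  let ?T = "{p. C / A < (fst p)\<^sup>2 + (snd p)\<^sup>2} :: (real \<times> real) set"
  interpret N: prob_space ?N by (rule prob_space_normal_measure) simp
  interpret P: product_sigma_finite "\<lambda>_. ?N"
    unfolding product_sigma_finite_def by (simp add: N.sigma_finite_measure_axioms)
  have [measurable]: "(\<lambda>x. x i) \<in> borel_measurable (PiM {i, j} (\<lambda>_. ?N))"
      "(\<lambda>x. x j) \<in> borel_measurable (PiM {i, j} (\<lambda>_. ?N))"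
    by (simp_all add: borel_measurable_component_normal_measure)
  have S: "?S \<in> sets (PiM {i, j} (\<lambda>_. ?N))" by measurable
  have "{p \<in> space (borel \<Otimes>\<^sub>M (borel :: real measure)). C / A < (fst p)\<^sup>2 + (snd p)\<^sup>2} \<in>
      sets (borel \<Otimes>\<^sub>M borel)"
    by measurable
  then have T: "?T \<in> sets (?N \<Otimes>\<^sub>M ?N)"
    by (simp add: sets_pair_measure_cong[OF sets_normal_measure sets_normal_measure] space_pair_measure)
  have "indicator ?S z = indicator ?T (z i, z j)" if "z \<in> space (PiM {i, j} (\<lambda>_. ?N))" for z
    using that A by (simp add: indicator_def pos_divide_less_eq mult.commute)
  then have "emeasure (PiM {i, j} (\<lambda>_. ?N)) ?S = (\<integral>\<^sup>+z. indicator ?T (z i, z j) \<partial>PiM {i, j} (\<lambda>_. ?N))"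
    unfolding nn_integral_indicator[OF S, symmetric] by (rule nn_integral_cong)
  also have "\<dots> = (\<integral>\<^sup>+p. indicator ?T (fst p, snd p) \<partial>(?N \<Otimes>\<^sub>M ?N))"
  proof (rule P.product_nn_integral_pair[OF _ ij])
    have "(\<lambda>(x, y). indicator ?T (x, y)) = (indicator ?T :: real \<times> real \<Rightarrow> ennreal)"
      by (simp add: fun_eq_iff)
    then show "(\<lambda>(x, y). indicator ?T (x, y)) \<in> borel_measurable (?N \<Otimes>\<^sub>M ?N)"
      using borel_measurable_indicator[OF T] by simp
  qed
  also have "\<dots> = ennreal (exp (- (C / A)))"
    using T A C by (simp add: emeasure_normal_pair_sum_sq_greater)
  finally show ?thesis .
qed

lemma nn_integral_PiM_exp_neg_sum_sq:
  fixes l :: real assumes l: "l \<ge> 0" and ij: "i \<noteq> j"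
  shows "(\<integral>\<^sup>+z. ennreal (exp (- l * ((z i)\<^sup>2 + (z j)\<^sup>2))) \<partial>PiM {i, j} (\<lambda>_. normal_measure (sqrt (1/2))))
    = ennreal (1 / (1 + l))"
proof -
  let ?N = "normal_measure (sqrt (1/2))"
  interpret N: prob_space ?N by (rule prob_space_normal_measure) simp
  interpret P: product_sigma_finite "\<lambda>_. ?N"
    unfolding product_sigma_finite_def by (simp add: N.sigma_finite_measure_axioms)
  have "ennreal (exp (- l * ((z i)\<^sup>2 + (z j)\<^sup>2))) = (\<Prod>k\<in>{i, j}. ennreal (exp (- l * (z k)\<^sup>2)))" for z
    using ij by (simp add: ennreal_mult[symmetric] exp_add[symmetric] algebra_simps)
  then have "(\<integral>\<^sup>+z. ennreal (exp (- l * ((z i)\<^sup>2 + (z j)\<^sup>2))) \<partial>PiM {i, j} (\<lambda>_. ?N)) =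
      (\<integral>\<^sup>+z. (\<Prod>k\<in>{i, j}. ennreal (exp (- l * (z k)\<^sup>2))) \<partial>PiM {i, j} (\<lambda>_. ?N))"
    by presburger
  also have "\<dots> = (\<Prod>k\<in>{i, j}. (\<integral>\<^sup>+t. ennreal (exp (- l * t\<^sup>2)) \<partial>?N))"
    by (rule P.product_nn_integral_prod) (simp_all add: measurable_normal_measure)
  also have "\<dots> = ennreal (1 / (1 + l))"
    using nn_integral_normal_exp_neg_sq[OF l] ij l by (simp add: ennreal_mult[symmetric])
  finally show ?thesis .
qed

lemma emeasure_PiM_sum_sq_greater_sum_sq_eq_nn_integral:
  fixes A B C :: real assumes A: "A > 0" and B: "B \<ge> 0" and C: "C \<ge> 0"
  shows "emeasure (PiM {0, 1, 2, 3::nat} (\<lambda>_. normal_measure (sqrt (1/2))))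
      {z \<in> space (PiM {0, 1, 2, 3::nat} (\<lambda>_. normal_measure (sqrt (1/2)))).
        B * ((z 2)\<^sup>2 + (z 3)\<^sup>2) + C < A * ((z 0)\<^sup>2 + (z 1)\<^sup>2)} =
    (\<integral>\<^sup>+x. ennreal (exp (- ((B * ((x 2)\<^sup>2 + (x 3)\<^sup>2) + C) / A)))
      \<partial>PiM {2, 3::nat} (\<lambda>_. normal_measure (sqrt (1/2))))"
proof -
  let ?N = "normal_measure (sqrt (1/2))"
  define I where "I = {2, 3::nat}"
  define J where "J = {0, 1::nat}"
  let ?P = "\<lambda>z::nat \<Rightarrow> real. B * ((z 2)\<^sup>2 + (z 3)\<^sup>2) + C < A * ((z 0)\<^sup>2 + (z 1)\<^sup>2)"
  let ?S = "{z \<in> space (PiM (I \<union> J) (\<lambda>_. ?N)). ?P z}"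
  interpret N: prob_space ?N by (rule prob_space_normal_measure) simp
  interpret P: product_sigma_finite "\<lambda>_::nat. ?N"
    unfolding product_sigma_finite_def by (simp add: N.sigma_finite_measure_axioms)
  have IJ: "I \<inter> J = {}" "finite I" "finite J" unfolding I_def J_def by auto
  have [measurable]: "(\<lambda>x. x k) \<in> borel_measurable (PiM (I \<union> J) (\<lambda>_. ?N))" if "k \<le> 3" for k
    using that by (intro borel_measurable_component_normal_measure) (auto simp: I_def J_def)
  have S: "?S \<in> sets (PiM (I \<union> J) (\<lambda>_. ?N))" by measurable
  have inner_integral: "(\<integral>\<^sup>+y. indicator ?S (merge I J (x, y)) \<partial>PiM J (\<lambda>_. ?N)) =
      ennreal (exp (- ((B * ((x 2)\<^sup>2 + (x 3)\<^sup>2) + C) / A)))" if x: "x \<in> space (PiM I (\<lambda>_. ?N))" for x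
  proof -
    define C' where "C' = B * ((x 2)\<^sup>2 + (x 3)\<^sup>2) + C"
    let ?SJ = "{y \<in> space (PiM J (\<lambda>_. ?N)). C' < A * ((y 0)\<^sup>2 + (y 1)\<^sup>2)}"
    have [measurable]: "(\<lambda>x. x 0) \<in> borel_measurable (PiM J (\<lambda>_. ?N))"
        "(\<lambda>x. x 1) \<in> borel_measurable (PiM J (\<lambda>_. ?N))"
      by (simp_all add: borel_measurable_component_normal_measure J_def)
    have SJ: "?SJ \<in> sets (PiM J (\<lambda>_. ?N))" by measurable
    have "indicator ?S (merge I J (x, y)) = indicator ?SJ y" if y: "y \<in> space (PiM J (\<lambda>_. ?N))" for y
    proof -
      have "merge I J (x, y) \<in> space (PiM (I \<union> J) (\<lambda>_. ?N))"
        using x y by (auto simp: space_PiM PiE_iff extensional_merge_sub)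
      moreover have "merge I J (x, y) 0 = y 0" "merge I J (x, y) 1 = y 1"
        "merge I J (x, y) 2 = x 2" "merge I J (x, y) 3 = x 3"
        unfolding I_def J_def by (auto simp: merge_def)
      ultimately show ?thesis using y by (simp add: indicator_def C'_def)
    qed
    then have "(\<integral>\<^sup>+y. indicator ?S (merge I J (x, y)) \<partial>PiM J (\<lambda>_. ?N)) = emeasure (PiM J (\<lambda>_. ?N)) ?SJ"
      unfolding nn_integral_indicator[OF SJ, symmetric] by (rule nn_integral_cong)
    also have "\<dots> = ennreal (exp (- (C' / A)))"
      unfolding J_def using A B C by (intro emeasure_PiM_sum_sq_greater) (simp_all add: C'_def)
    finally show ?thesis unfolding C'_def .
  qed
  have "emeasure (PiM (I \<union> J) (\<lambda>_. ?N)) ?S =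
      (\<integral>\<^sup>+x. (\<integral>\<^sup>+y. indicator ?S (merge I J (x, y)) \<partial>PiM J (\<lambda>_. ?N)) \<partial>PiM I (\<lambda>_. ?N))"
    unfolding nn_integral_indicator[OF S, symmetric]
    by (rule P.product_nn_integral_fold[OF IJ]) (use S in simp)
  also have "\<dots> = (\<integral>\<^sup>+x. ennreal (exp (- ((B * ((x 2)\<^sup>2 + (x 3)\<^sup>2) + C) / A))) \<partial>PiM I (\<lambda>_. ?N))"
    by (rule nn_integral_cong) (rule inner_integral)
  finally show ?thesis by (simp add: I_def J_def insert_commute)
qed

text \<open>After integrating out \<open>(z\<^sub>0, z\<^sub>1)\<close>, what remains is the Laplace transform of the
  exponential variable \<open>z\<^sub>2\<^sup>2 + z\<^sub>3\<^sup>2\<close>.\<close>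

lemma emeasure_PiM_sum_sq_greater_sum_sq:
  fixes A B C :: real assumes A: "A > 0" and B: "B \<ge> 0" and C: "C \<ge> 0"
  shows "emeasure (PiM {0, 1, 2, 3::nat} (\<lambda>_. normal_measure (sqrt (1/2))))
      {z \<in> space (PiM {0, 1, 2, 3::nat} (\<lambda>_. normal_measure (sqrt (1/2)))).
        B * ((z 2)\<^sup>2 + (z 3)\<^sup>2) + C < A * ((z 0)\<^sup>2 + (z 1)\<^sup>2)} =
    ennreal (A / (A + B) * exp (- (C / A)))"
proof -
  let ?M = "PiM {2, 3::nat} (\<lambda>_. normal_measure (sqrt (1/2)))"
  have [measurable]: "(\<lambda>x. x 2) \<in> borel_measurable ?M" "(\<lambda>x. x 3) \<in> borel_measurable ?M"
    by (simp_all add: borel_measurable_component_normal_measure)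
  have "exp (- ((B * ((x 2)\<^sup>2 + (x 3)\<^sup>2) + C) / A)) =
      exp (- (C / A)) * exp (- (B / A) * ((x 2)\<^sup>2 + (x 3)\<^sup>2))" for x :: "nat \<Rightarrow> real"
    using A by (simp add: exp_add[symmetric] field_simps)
  then have "(\<integral>\<^sup>+x. ennreal (exp (- ((B * ((x 2)\<^sup>2 + (x 3)\<^sup>2) + C) / A))) \<partial>?M) =
      (\<integral>\<^sup>+x. ennreal (exp (- (C / A))) * ennreal (exp (- (B / A) * ((x 2)\<^sup>2 + (x 3)\<^sup>2))) \<partial>?M)"
    by (simp add: ennreal_mult[symmetric])
  also have "\<dots> = ennreal (exp (- (C / A))) *
      (\<integral>\<^sup>+x. ennreal (exp (- (B / A) * ((x 2)\<^sup>2 + (x 3)\<^sup>2))) \<partial>?M)"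
    by (rule nn_integral_cmult) measurable
  also have "\<dots> = ennreal (exp (- (C / A))) * ennreal (1 / (1 + B / A))"
    using nn_integral_PiM_exp_neg_sum_sq[of "B / A" "2::nat" 3] A B by simp
  also have "\<dots> = ennreal (A / (A + B) * exp (- (C / A)))"
    using A B by (simp add: ennreal_mult[symmetric] field_simps)
  finally show ?thesis
    using emeasure_PiM_sum_sq_greater_sum_sq_eq_nn_integral[OF A B C] by simp
qed

section \<open>Polarisation of the quadratic form\<close>

lemma cmod_add_sq_minus_cmod_diff_sq: "(cmod (a + b))\<^sup>2 - (cmod (a - b))\<^sup>2 = 4 * Re (cnj a * b)"
  unfolding cmod_power2 by (simp add: power2_eq_square algebra_simps)

lemma norm_diff_scale_sq:
  assumes x: "norm x = 1"
  shows "(norm (h - c *s x))\<^sup>2 = (norm h)\<^sup>2 - 2 * Re (cnj c * cdot x h) + (cmod c)\<^sup>2"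
proof -
  have cc: "cnj c * c = complex_of_real ((cmod c)\<^sup>2)"
    by (metis complex_norm_square mult.commute)
  have "complex_of_real ((norm (h - c *s x))\<^sup>2) = cdot (h - c *s x) (h - c *s x)"
    by (simp add: cdot_self)
  also have "\<dots> = cdot h h - c * cdot h x - cnj c * cdot x h + cnj c * c * cdot x x"
    by (simp add: cdot_diff_left cdot_diff_right cdot_scale_left cdot_scale_right algebra_simps)
  also have "\<dots> = complex_of_real ((norm h)\<^sup>2) - c * cnj (cdot x h) - cnj c * cdot x h +
      complex_of_real ((cmod c)\<^sup>2)"
    using x by (simp only: cdot_self cdot_commute[of h x] cc) simp
  finally have "(norm (h - c *s x))\<^sup>2 = Re (complex_of_real ((norm h)\<^sup>2) - c * cnj (cdot x h) -
      cnj c * cdot x h + complex_of_real ((cmod c)\<^sup>2))"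
    by (metis Re_complex_of_real)
  then show ?thesis by (simp add: algebra_simps)
qed

lemma rinner_cdot_scale_polarisation:
  fixes xs h a :: "complex ^ 'n::finite" and m :: real
  assumes m: "m > 0"
  defines "h' \<equiv> h - (\<i> * complex_of_real (Im (cdot xs h))) *s xs"
  shows "rinner (cdot a xs *s a) h =
    ((cmod (cdot a (complex_of_real m *s xs + complex_of_real (1 / m) *s h')))\<^sup>2 -
     (cmod (cdot a (complex_of_real m *s xs - complex_of_real (1 / m) *s h')))\<^sup>2) / 4"
proof -
  define u where "u = cdot a xs"
  have ah': "cdot a h' = cdot a h - \<i> * complex_of_real (Im (cdot xs h)) * u"
    unfolding h'_def u_def by (simp add: cdot_diff_right cdot_scale_right)
  have "Re (cnj (complex_of_real m * u) * (complex_of_real (1 / m) * cdot a h')) =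
      Re (cnj u * cdot a h')"
    using m by (simp add: field_simps)
  also have "\<dots> = Re (cnj u * cdot a h)"
    unfolding ah' by (simp add: algebra_simps)
  finally have "Re (cnj (complex_of_real m * u) * (complex_of_real (1 / m) * cdot a h')) =
      Re (cnj u * cdot a h)" .
  then show ?thesis
    using cmod_add_sq_minus_cmod_diff_sq[of "complex_of_real m * u" "complex_of_real (1 / m) * cdot a h'"]
    by (simp add: rinner_def u_def cdot_scale_left cdot_add_right cdot_diff_right cdot_scale_right)
qed

lemma polarisation_vectors:
  fixes xs h :: "complex ^ 'n::finite" and m :: real
  assumes x: "norm xs = 1" and m: "m > 0"
  defines "h' \<equiv> h - (\<i> * complex_of_real (Im (cdot xs h))) *s xs"
  assumes mm: "m\<^sup>2 = norm h'"
  defines "y1 \<equiv> complex_of_real m *s xs + complex_of_real (1 / m) *s h'"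
    and "y2 \<equiv> complex_of_real m *s xs - complex_of_real (1 / m) *s h'"
  shows "(norm y1)\<^sup>2 = 2 * (norm h' + Re (cdot xs h))"
    and "(norm y2)\<^sup>2 = 2 * (norm h' - Re (cdot xs h))"
    and "cdot y1 y2 = 0"
proof -
  have xx: "cdot xs xs = 1" using x by (simp add: cdot_self)
  have xh': "cdot xs h' = complex_of_real (Re (cdot xs h))"
    unfolding h'_def by (simp add: cdot_diff_right cdot_scale_right xx complex_eq_iff)
  have h'x: "cdot h' xs = complex_of_real (Re (cdot xs h))"
    using xh' cdot_commute[of h' xs] by simp
  have h'h': "cdot h' h' = complex_of_real (m\<^sup>2 * m\<^sup>2)"
    unfolding cdot_self mm by (simp add: power2_eq_square)
  let ?A = "complex_of_real (Re (cdot xs h))"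
  note expand = cdot_add_left cdot_add_right cdot_diff_left cdot_diff_right cdot_scale_left
    cdot_scale_right xx xh' h'x h'h' power2_eq_square field_simps
  have "cdot y1 y1 = complex_of_real (m * m) + ?A + ?A + complex_of_real (m\<^sup>2)"
    unfolding y1_def using m by (simp add: expand)
  then show "(norm y1)\<^sup>2 = 2 * (norm h' + Re (cdot xs h))"
    using cdot_self[of y1] mm by (simp add: power2_eq_square complex_eq_iff)
  have "cdot y2 y2 = complex_of_real (m * m) - ?A - ?A + complex_of_real (m\<^sup>2)"
    unfolding y2_def using m by (simp add: expand)
  then show "(norm y2)\<^sup>2 = 2 * (norm h' - Re (cdot xs h))"
    using cdot_self[of y2] mm by (simp add: power2_eq_square complex_eq_iff)
  have "cdot y1 y2 = complex_of_real (m * m) - ?A + ?A - complex_of_real (m\<^sup>2)"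
    unfolding y1_def y2_def using m by (simp add: expand)
  then show "cdot y1 y2 = 0"
    by (simp add: power2_eq_square)
qed

lemma C'_R_set_scalar_conditions:
  assumes x: "norm xs = 1" and h: "h \<in> C'_set xs \<delta> \<inter> R_set xs \<delta>"
  defines "A \<equiv> Re (cdot xs h)" and "I \<equiv> Im (cdot xs h)"
    and "\<beta> \<equiv> norm (h - cdot xs h *s xs)"
    and "\<rho> \<equiv> norm (h - (\<i> * complex_of_real (Im (cdot xs h))) *s xs)"
  shows "\<rho>\<^sup>2 = \<beta>\<^sup>2 + A\<^sup>2" and "(norm h)\<^sup>2 = \<rho>\<^sup>2 + I\<^sup>2"
    and "\<delta> * \<bar>I\<bar> \<le> \<beta>" and "- sqrt (1 - \<delta>\<^sup>2) * \<beta> \<le> \<delta> * A"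
proof -
  have \<rho>_sq: "\<rho>\<^sup>2 = (norm h)\<^sup>2 - I\<^sup>2"
    unfolding \<rho>_def norm_diff_scale_sq[OF x] I_def by (simp add: norm_mult power2_eq_square)
  have \<beta>_sq: "\<beta>\<^sup>2 = (norm h)\<^sup>2 - (cmod (cdot xs h))\<^sup>2"
    unfolding \<beta>_def norm_diff_scale_sq[OF x] cmod_power2 by (simp add: power2_eq_square)
  then show "\<rho>\<^sup>2 = \<beta>\<^sup>2 + A\<^sup>2" using \<rho>_sq by (simp add: cmod_power2 A_def I_def)
  show "(norm h)\<^sup>2 = \<rho>\<^sup>2 + I\<^sup>2" using \<rho>_sq by simp
  show "\<delta> * \<bar>I\<bar> \<le> \<beta>"
    using h unfolding R_set_def by (simp add: \<beta>_def I_def)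
  have "sqrt ((norm h)\<^sup>2 - (cmod (cdot xs h))\<^sup>2) = \<beta>"
    unfolding \<beta>_sq[symmetric] by (simp add: \<beta>_def)
  then show "- sqrt (1 - \<delta>\<^sup>2) * \<beta> \<le> \<delta> * A"
    using h unfolding C'_set_def rinner_def by (simp add: A_def)
qed

lemma exists_polarisation_pair:
  fixes xs h :: "complex ^ 'n::finite"
  assumes x: "norm xs = 1"
  defines "\<rho> \<equiv> norm (h - (\<i> * complex_of_real (Im (cdot xs h))) *s xs)"
  assumes \<rho>: "\<rho> > 0"
  obtains y1 y2 where "cdot y1 y2 = 0"
    and "(norm y1)\<^sup>2 = 2 * (\<rho> + Re (cdot xs h))" and "(norm y2)\<^sup>2 = 2 * (\<rho> - Re (cdot xs h))"
    and "\<And>a. rinner (cdot a xs *s a) h = ((cmod (cdot a y1))\<^sup>2 - (cmod (cdot a y2))\<^sup>2) / 4"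
proof -
  have m: "sqrt \<rho> > 0" "(sqrt \<rho>)\<^sup>2 = \<rho>" using \<rho> by simp_all
  show ?thesis
    using that polarisation_vectors[OF x m(1)] rinner_cdot_scale_polarisation[OF m(1)] m(2)
    unfolding \<rho>_def by blast
qed

section \<open>The deterministic estimate\<close>

text \<open>In the lemmas of this section, \<open>A\<close> and \<open>I\<close> are the real and imaginary parts of
  \<open>x\<^sub>\<star>\<^sup>* h\<close>, \<open>\<beta>\<close> is the norm of the component of \<open>h\<close> orthogonal to \<open>x\<^sub>\<star>\<close> and
  \<open>\<rho> = \<surd>(\<beta>\<^sup>2 + A\<^sup>2)\<close>.\<close>

lemma cone_condition_imp_lower_bound:
  fixes \<delta> A \<beta> \<rho> :: real
  assumes \<delta>: "0 < \<delta>" "\<delta> < 1" and \<beta>: "\<beta> \<ge> 0" and \<rho>: "\<rho> \<ge> 0" and \<rho>_sq: "\<rho>\<^sup>2 = \<beta>\<^sup>2 + A\<^sup>2"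
    and cone: "- sqrt (1 - \<delta>\<^sup>2) * \<beta> \<le> \<delta> * A"
  shows "- sqrt (1 - \<delta>\<^sup>2) * \<rho> \<le> A"
proof (cases "A \<ge> 0")
  case True
  moreover have "0 \<le> sqrt (1 - \<delta>\<^sup>2) * \<rho>" using \<delta> \<rho> by (simp add: power_le_one)
  ultimately show ?thesis by linarith
next
  case False
  have s_sq: "(sqrt (1 - \<delta>\<^sup>2))\<^sup>2 = 1 - \<delta>\<^sup>2" using \<delta> by (simp add: power_le_one)
  have "\<delta> * (- A) \<le> sqrt (1 - \<delta>\<^sup>2) * \<beta>" "0 \<le> \<delta> * (- A)"
    using cone False \<delta> by (simp_all add: mult_pos_neg less_imp_le)
  then have "(\<delta> * (- A))\<^sup>2 \<le> (sqrt (1 - \<delta>\<^sup>2) * \<beta>)\<^sup>2"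
    by (rule power_mono)
  then have "\<delta>\<^sup>2 * A\<^sup>2 \<le> (1 - \<delta>\<^sup>2) * \<beta>\<^sup>2" by (simp add: power_mult_distrib s_sq)
  then have "A\<^sup>2 \<le> (sqrt (1 - \<delta>\<^sup>2) * \<rho>)\<^sup>2"
    by (simp add: power_mult_distrib s_sq \<rho>_sq algebra_simps)
  then have "\<bar>A\<bar> \<le> sqrt (1 - \<delta>\<^sup>2) * \<rho>"
    using \<rho> \<delta> by (simp add: abs_le_square_iff[symmetric] power_le_one)
  then show ?thesis by linarith
qed

lemma rho_pos_of_norm_pos:
  fixes \<delta> A I \<beta> \<rho> nh :: real
  assumes \<delta>: "\<delta> > 0" and \<rho>: "\<rho> \<ge> 0" and nh: "nh > 0"
    and \<rho>_sq: "\<rho>\<^sup>2 = \<beta>\<^sup>2 + A\<^sup>2" and nh_sq: "nh\<^sup>2 = \<rho>\<^sup>2 + I\<^sup>2" and imag: "\<delta> * \<bar>I\<bar> \<le> \<beta>"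
  shows "\<rho> > 0"
proof (rule ccontr)
  assume "\<not> \<rho> > 0"
  then have "\<beta> = 0" using \<rho> \<rho>_sq by (simp add: sum_power2_eq_zero_iff)
  then have "I = 0" using imag \<delta> by (simp add: mult_le_0_iff)
  then show False using nh nh_sq \<open>\<not> \<rho> > 0\<close> \<rho> by simp
qed

text \<open>Either the component orthogonal to \<open>x\<^sub>\<star>\<close> is small, and then \<open>\<parallel>h\<parallel> \<le> \<surd>2 \<rho>\<close>, or it
  dominates, and then \<open>\<rho> + A \<ge> \<beta>\<^sup>2 / (2\<rho>)\<close> is comparable to \<open>\<beta> \<delta>\<close>.\<close>

lemma norm_delta_sq_le_rho_plus_A:
  fixes \<delta> A I \<beta> \<rho> nh :: real
  assumes \<delta>: "0 < \<delta>" "\<delta> < 1" and \<beta>: "\<beta> \<ge> 0" and \<rho>: "\<rho> > 0" and nh: "nh \<ge> 0"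
    and \<rho>_sq: "\<rho>\<^sup>2 = \<beta>\<^sup>2 + A\<^sup>2" and nh_sq: "nh\<^sup>2 = \<rho>\<^sup>2 + I\<^sup>2"
    and imag: "\<delta> * \<bar>I\<bar> \<le> \<beta>" and A: "- sqrt (1 - \<delta>\<^sup>2) * \<rho> \<le> A"
  shows "nh * \<delta>\<^sup>2 \<le> 2 * sqrt 2 * (\<rho> + A)"
proof -
  define s where "s = sqrt (1 - \<delta>\<^sup>2)"
  have s: "0 \<le> s" "s < 1" "s\<^sup>2 = 1 - \<delta>\<^sup>2"
    using \<delta> by (auto simp: s_def power_le_one power_less_one_iff)
  have \<rho>A: "(1 - s) * \<rho> \<le> \<rho> + A" using A by (simp add: s_def algebra_simps)
  have one_minus_s: "\<delta>\<^sup>2 \<le> 2 * (1 - s)"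
  proof -
    have "\<delta>\<^sup>2 = (1 - s) * (1 + s)" using s by (simp add: algebra_simps power2_eq_square)
    also have "\<dots> \<le> (1 - s) * 2" using s by (intro mult_left_mono) auto
    finally show ?thesis by simp
  qed
  show ?thesis
  proof (cases "\<beta> \<le> \<delta> * \<rho>")
    case True
    then have "\<delta> * \<bar>I\<bar> \<le> \<delta> * \<rho>" using imag by simp
    then have "\<bar>I\<bar> \<le> \<rho>" using \<delta> by simp
    then have "nh\<^sup>2 \<le> (sqrt 2 * \<rho>)\<^sup>2"
      using nh_sq \<rho> abs_le_square_iff[of I \<rho>] by (simp add: power_mult_distrib)
    then have "nh \<le> sqrt 2 * \<rho>" using \<rho> nh by (simp add: abs_le_square_iff[symmetric])
    then have "nh * \<delta>\<^sup>2 \<le> sqrt 2 * \<rho> * (2 * (1 - s))"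
      using one_minus_s \<rho> by (intro mult_mono) auto
    also have "\<dots> \<le> 2 * sqrt 2 * (\<rho> + A)"
      using mult_left_mono[OF \<rho>A, of "2 * sqrt 2"] by (simp add: algebra_simps)
    finally show ?thesis .
  next
    case False
    have "0 \<le> \<delta> * \<rho>" using \<delta> \<rho> by simp
    then have \<beta>_pos: "\<beta> > 0" using False by linarith
    have "\<rho> \<le> \<beta> / \<delta>" "\<bar>I\<bar> \<le> \<beta> / \<delta>"
      using False imag \<delta> by (simp_all add: field_simps mult.commute)
    then have "\<rho>\<^sup>2 \<le> (\<beta> / \<delta>)\<^sup>2" "I\<^sup>2 \<le> (\<beta> / \<delta>)\<^sup>2"
      using \<rho> \<beta> \<delta> by (simp_all add: power_mono abs_le_square_iff[symmetric])
    moreover have "(sqrt 2 * (\<beta> / \<delta>))\<^sup>2 = (\<beta> / \<delta>)\<^sup>2 + (\<beta> / \<delta>)\<^sup>2"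
      by (simp only: power_mult_distrib real_sqrt_pow2[of 2])
    ultimately have "nh\<^sup>2 \<le> (sqrt 2 * (\<beta> / \<delta>))\<^sup>2"
      using nh_sq by linarith
    then have nh_le: "nh \<le> sqrt 2 * (\<beta> / \<delta>)"
      using \<beta> \<delta> nh by (simp add: abs_le_square_iff[symmetric])
    have "2 * \<rho> * (\<rho> + A) - \<beta>\<^sup>2 = (\<rho> + A)\<^sup>2"
      using \<rho>_sq by (simp add: power2_eq_square algebra_simps)
    then have "\<beta>\<^sup>2 \<le> 2 * \<rho> * (\<rho> + A)"
      using zero_le_power2[of "\<rho> + A"] by linarith
    moreover have "\<beta> * (\<delta> * \<rho>) < \<beta>\<^sup>2"
      using False \<beta>_pos by (simp add: power2_eq_square)
    ultimately have "\<beta> * \<delta> * \<rho> \<le> 2 * (\<rho> + A) * \<rho>" by (simp add: algebra_simps)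
    then have \<beta>\<delta>: "\<beta> * \<delta> \<le> 2 * (\<rho> + A)" using \<rho> by simp
    have "nh * \<delta>\<^sup>2 \<le> sqrt 2 * (\<beta> / \<delta>) * \<delta>\<^sup>2" using nh_le by (intro mult_right_mono) auto
    also have "\<dots> = sqrt 2 * (\<beta> * \<delta>)" using \<delta> by (simp add: power2_eq_square)
    also have "\<dots> \<le> 2 * sqrt 2 * (\<rho> + A)" using \<beta>\<delta> by simp
    finally show ?thesis .
  qed
qed

lemma tail_formula_lower_bound:
  fixes \<delta> \<eta> t A \<rho> nh :: real
  assumes \<delta>: "0 < \<delta>" "\<delta> < 1" and \<eta>: "\<eta> > 0" and t: "t > 0" and \<rho>: "\<rho> > 0"
    and A: "- sqrt (1 - \<delta>\<^sup>2) * \<rho> \<le> A" and nh: "nh * \<delta>\<^sup>2 \<le> 2 * sqrt 2 * (\<rho> + A)"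
    and large: "nh > 1 / (t * \<eta>)"
  shows "(1/2 - sqrt (1 - \<delta>\<^sup>2) / 2) * exp (- 2 * sqrt 2 * t / \<delta>\<^sup>2) \<le>
    (\<rho> + A) / (2 * \<rho>) * exp (- (1 / (\<eta> * (\<rho> + A))))"
proof -
  define s where "s = sqrt (1 - \<delta>\<^sup>2)"
  have s: "0 \<le> s" "s < 1"
    using \<delta> by (auto simp: s_def power_le_one power_less_one_iff)
  have \<rho>A: "(1 - s) * \<rho> \<le> \<rho> + A" using A by (simp add: s_def algebra_simps)
  have "(1 - s) * \<rho> > 0" using s \<rho> by simp
  then have \<rho>A_pos: "\<rho> + A > 0" using \<rho>A by linarith
  have prefactor: "1/2 - s/2 \<le> (\<rho> + A) / (2 * \<rho>)"
    using \<rho>A \<rho> by (simp add: field_simps)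
  have "1 < t * \<eta> * nh" using large t \<eta> by (simp add: pos_divide_less_eq mult.commute)
  also have "t * \<eta> * nh \<le> t * \<eta> * (2 * sqrt 2 * (\<rho> + A)) / \<delta>\<^sup>2"
    using mult_left_mono[OF nh, of "t * \<eta>"] t \<eta> \<delta> by (simp add: pos_le_divide_eq mult.assoc)
  also have "\<dots> = 2 * sqrt 2 * t / \<delta>\<^sup>2 * (\<eta> * (\<rho> + A))" by (simp add: field_simps)
  finally have "1 / (\<eta> * (\<rho> + A)) \<le> 2 * sqrt 2 * t / \<delta>\<^sup>2"
    using \<eta> \<rho>A_pos by (simp add: pos_divide_le_eq)
  then have "exp (- 2 * sqrt 2 * t / \<delta>\<^sup>2) \<le> exp (- (1 / (\<eta> * (\<rho> + A))))"
    by simp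
  then show ?thesis
    using prefactor s unfolding s_def[symmetric] by (intro mult_mono) auto
qed

section \<open>The probability of the event\<close>

lemma gauss_half_eq: "gauss_half = PiM UNIV (\<lambda>_. normal_measure (sqrt (1/2)))"
  by (simp add: gauss_half_def normal_measure_def)

lemma cmod_cdot_avec_sq_normalised:
  assumes "norm y > 0"
  shows "(cmod (cdot (avec g g') y))\<^sup>2 = (norm y)\<^sup>2 *
    ((stack_pair (g, g') \<bullet> ((1 / norm y) *\<^sub>R re_dual y))\<^sup>2 +
     (stack_pair (g, g') \<bullet> ((1 / norm y) *\<^sub>R im_dual y))\<^sup>2)"
  unfolding cmod_cdot_avec_sq using assms by (simp add: power2_eq_square field_simps)

lemma emeasure_cmod_cdot_sq_greater:
  fixes y :: "complex ^ 'n::finite" and C :: real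
  assumes y: "norm y > 0" and C: "C \<ge> 0"
  shows "emeasure (gauss_half \<Otimes>\<^sub>M gauss_half) {p. C < (cmod (cdot (avec (fst p) (snd p)) y))\<^sup>2}
    = ennreal (exp (- (C / (norm y)\<^sup>2)))"
proof -
  let ?N = "normal_measure (sqrt (1/2))"
  define v where "v j = (1 / norm y) *\<^sub>R (if j = (0::nat) then re_dual y else im_dual y)" for j
  let ?P = "\<lambda>z::nat \<Rightarrow> real. C < (norm y)\<^sup>2 * ((z 0)\<^sup>2 + (z 1)\<^sup>2)"
  have "v 0 \<bullet> v 1 = 0" "v 1 \<bullet> v 0 = 0"
    by (simp_all add: v_def re_dual_inner_im_dual im_dual_inner_re_dual cdot_self)
  then have orth: "v i \<bullet> v j = 0" if "i \<in> {0, 1}" "j \<in> {0, 1}" "i \<noteq> j" for i j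
    using that by auto
  have unit: "norm (v j) = 1" for j
    using y by (simp add: v_def norm_re_dual norm_im_dual)
  have [measurable]: "(\<lambda>x. x 0) \<in> borel_measurable (PiM {0, 1::nat} (\<lambda>_. ?N))"
      "(\<lambda>x. x 1) \<in> borel_measurable (PiM {0, 1::nat} (\<lambda>_. ?N))"
    by (simp_all add: borel_measurable_component_normal_measure)
  have event: "{z \<in> space (PiM {0, 1} (\<lambda>_. ?N)). ?P z} \<in> sets (PiM {0, 1} (\<lambda>_. ?N))"
    by measurable
  have event_eq: "{p. C < (cmod (cdot (avec (fst p) (snd p)) y))\<^sup>2} =
      {p. ?P (\<lambda>j\<in>{0, 1}. stack_pair p \<bullet> v j)}"
    using y by (simp add: cmod_cdot_avec_sq_normalised v_def)
  have "emeasure (gauss_half \<Otimes>\<^sub>M gauss_half) {p. ?P (\<lambda>j\<in>{0, 1}. stack_pair p \<bullet> v j)} =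
      emeasure (PiM {0, 1} (\<lambda>_. ?N)) {z \<in> space (PiM {0, 1} (\<lambda>_. ?N)). ?P z}"
    unfolding gauss_half_eq
    by (rule emeasure_stack_pair_orthonormal[OF _ _ _ _ event]) (use orth unit in auto)
  also have "\<dots> = ennreal (exp (- (C / (norm y)\<^sup>2)))"
    using y by (intro emeasure_PiM_sum_sq_greater[OF _ C]) simp_all
  finally show ?thesis unfolding event_eq .
qed

lemma emeasure_cmod_cdot_sq_greater_cmod_cdot_sq:
  fixes y1 y2 :: "complex ^ 'n::finite" and C :: real
  assumes orth: "cdot y1 y2 = 0" and y1: "norm y1 > 0" and y2: "norm y2 > 0" and C: "C \<ge> 0"
  shows "emeasure (gauss_half \<Otimes>\<^sub>M gauss_half)
      {p. (cmod (cdot (avec (fst p) (snd p)) y2))\<^sup>2 + C < (cmod (cdot (avec (fst p) (snd p)) y1))\<^sup>2}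
    = ennreal ((norm y1)\<^sup>2 / ((norm y1)\<^sup>2 + (norm y2)\<^sup>2) * exp (- (C / (norm y1)\<^sup>2)))"
proof -
  let ?N = "normal_measure (sqrt (1/2))"
  let ?J = "{0, 1, 2, 3::nat}"
  define v0 v1 v2 v3 where "v0 = (1 / norm y1) *\<^sub>R re_dual y1" and "v1 = (1 / norm y1) *\<^sub>R im_dual y1"
    and "v2 = (1 / norm y2) *\<^sub>R re_dual y2" and "v3 = (1 / norm y2) *\<^sub>R im_dual y2"
  define v where "v j = (if j = (0::nat) then v0 else if j = 1 then v1 else if j = 2 then v2 else v3)" for j
  let ?P = "\<lambda>z::nat \<Rightarrow> real. (norm y2)\<^sup>2 * ((z 2)\<^sup>2 + (z 3)\<^sup>2) + C < (norm y1)\<^sup>2 * ((z 0)\<^sup>2 + (z 1)\<^sup>2)"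
  have "v0 \<bullet> v1 = 0" "v0 \<bullet> v2 = 0" "v0 \<bullet> v3 = 0" "v1 \<bullet> v2 = 0" "v1 \<bullet> v3 = 0" "v2 \<bullet> v3 = 0"
    by (simp_all add: v0_def v1_def v2_def v3_def re_dual_inner_re_dual re_dual_inner_im_dual
        im_dual_inner_re_dual im_dual_inner_im_dual cdot_self orth)
  then have "v i \<bullet> v j = 0" if "i \<in> ?J" "j \<in> ?J" "i \<noteq> j" for i j
    using that by (auto simp: v_def inner_commute)
  moreover have "norm (v j) = 1" for j
    using y1 y2 by (simp add: v_def v0_def v1_def v2_def v3_def norm_re_dual norm_im_dual)
  moreover have [measurable]: "(\<lambda>x. x k) \<in> borel_measurable (PiM ?J (\<lambda>_. ?N))" if "k \<le> 3" for k
    using that by (intro borel_measurable_component_normal_measure) auto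
  then have "{z \<in> space (PiM ?J (\<lambda>_. ?N)). ?P z} \<in> sets (PiM ?J (\<lambda>_. ?N))"
    by measurable
  ultimately have "emeasure (gauss_half \<Otimes>\<^sub>M gauss_half) {p. ?P (\<lambda>j\<in>?J. stack_pair p \<bullet> v j)} =
      emeasure (PiM ?J (\<lambda>_. ?N)) {z \<in> space (PiM ?J (\<lambda>_. ?N)). ?P z}"
    unfolding gauss_half_eq by (intro emeasure_stack_pair_orthonormal) auto
  also have "\<dots> = ennreal ((norm y1)\<^sup>2 / ((norm y1)\<^sup>2 + (norm y2)\<^sup>2) * exp (- (C / (norm y1)\<^sup>2)))"
    using y1 by (intro emeasure_PiM_sum_sq_greater_sum_sq[OF _ _ C]) simp_all
  finally show ?thesis
    using y1 y2 by (simp add: cmod_cdot_avec_sq_normalised v_def v0_def v1_def v2_def v3_def)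
qed

lemma emeasure_cmod_cdot_sq_difference_greater:
  fixes y1 y2 :: "complex ^ 'n::finite" and C :: real
  assumes orth: "cdot y1 y2 = 0" and y1: "norm y1 > 0" and C: "C \<ge> 0"
  shows "emeasure (gauss_half \<Otimes>\<^sub>M gauss_half)
      {p. (cmod (cdot (avec (fst p) (snd p)) y2))\<^sup>2 + C < (cmod (cdot (avec (fst p) (snd p)) y1))\<^sup>2}
    = ennreal ((norm y1)\<^sup>2 / ((norm y1)\<^sup>2 + (norm y2)\<^sup>2) * exp (- (C / (norm y1)\<^sup>2)))"
proof (cases "y2 = 0")
  case True
  then show ?thesis using emeasure_cmod_cdot_sq_greater[OF y1 C] y1 by simp
next
  case False
  then show ?thesis using emeasure_cmod_cdot_sq_greater_cmod_cdot_sq[OF orth y1 _ C] by simp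
qed

lemma measure_rinner_greater:
  fixes xs h :: "complex ^ 'n::finite" and \<eta> :: real
  assumes x: "norm xs = 1" and \<eta>: "\<eta> > 0"
  defines "\<rho> \<equiv> norm (h - (\<i> * complex_of_real (Im (cdot xs h))) *s xs)" and "A \<equiv> Re (cdot xs h)"
  assumes \<rho>: "\<rho> > 0" and \<rho>A: "\<rho> + A > 0"
  shows "measure (gauss_half \<Otimes>\<^sub>M gauss_half)
      {(g, g'). rinner (cdot (avec g g') xs *s avec g g') h > 1 / (2 * \<eta>)} =
    (\<rho> + A) / (2 * \<rho>) * exp (- (1 / (\<eta> * (\<rho> + A))))"
proof -
  obtain y1 y2 where orth: "cdot y1 y2 = 0" and y1: "(norm y1)\<^sup>2 = 2 * (\<rho> + A)"
    and y2: "(norm y2)\<^sup>2 = 2 * (\<rho> - A)"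
    and form: "\<And>a. rinner (cdot a xs *s a) h = ((cmod (cdot a y1))\<^sup>2 - (cmod (cdot a y2))\<^sup>2) / 4"
    using exists_polarisation_pair[OF x] \<rho> unfolding \<rho>_def A_def by blast
  have "(norm y1)\<^sup>2 > 0" using y1 \<rho>A by simp
  then have "norm y1 > 0" by (simp add: zero_less_power2)
  moreover have "{(g, g'). rinner (cdot (avec g g') xs *s avec g g') h > 1 / (2 * \<eta>)} =
      {p. (cmod (cdot (avec (fst p) (snd p)) y2))\<^sup>2 + 2 / \<eta> < (cmod (cdot (avec (fst p) (snd p)) y1))\<^sup>2}"
    using \<eta> by (auto simp: form field_simps)
  ultimately have "emeasure (gauss_half \<Otimes>\<^sub>M gauss_half)
      {(g, g'). rinner (cdot (avec g g') xs *s avec g g') h > 1 / (2 * \<eta>)} =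
      ennreal ((norm y1)\<^sup>2 / ((norm y1)\<^sup>2 + (norm y2)\<^sup>2) * exp (- (2 / \<eta> / (norm y1)\<^sup>2)))"
    using emeasure_cmod_cdot_sq_difference_greater[OF orth] \<eta> by simp
  also have "(norm y1)\<^sup>2 / ((norm y1)\<^sup>2 + (norm y2)\<^sup>2) * exp (- (2 / \<eta> / (norm y1)\<^sup>2)) =
      (\<rho> + A) / (2 * \<rho>) * exp (- (1 / (\<eta> * (\<rho> + A))))"
  proof -
    have "2 / \<eta> / (2 * (\<rho> + A)) = 2 / (2 * (\<eta> * (\<rho> + A)))"
      by (simp only: divide_divide_eq_left mult.left_commute)
    also have "\<dots> = 1 / (\<eta> * (\<rho> + A))" by simp
    finally have "2 / \<eta> / (2 * (\<rho> + A)) = 1 / (\<eta> * (\<rho> + A))" .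
    moreover have "2 * (\<rho> + A) / (2 * (\<rho> + A) + 2 * (\<rho> - A)) = (\<rho> + A) / (2 * \<rho>)"
      using \<rho> by (simp add: field_simps)
    ultimately show ?thesis unfolding y1 y2 by simp
  qed
  finally show ?thesis
    using \<rho> \<rho>A by (simp add: measure_def)
qed

theorem lemma3:
  fixes xs h :: "complex ^ 'n::finite"
    and \<delta> \<eta> t :: real
  assumes "0 < \<delta>" and "\<delta> < 1" and "\<eta> > 0" and "t > 0"
    and "norm xs = 1"
    and "h \<in> C'_set xs \<delta> \<inter> R_set xs \<delta>"
    and "norm h > 1 / (t * \<eta>)"
  shows "measure (gauss_half \<Otimes>\<^sub>M gauss_half)
           {(g, g'). rinner (cdot (avec g g') xs *s avec g g') h > 1 / (2 * \<eta>)}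
         \<ge> (1/2 - sqrt (1 - \<delta>^2) / 2) * exp (- 2 * sqrt 2 * t / \<delta>^2)"
proof -
  define A where "A = Re (cdot xs h)"
  define I where "I = Im (cdot xs h)"
  define \<beta> where "\<beta> = norm (h - cdot xs h *s xs)"
  define \<rho> where "\<rho> = norm (h - (\<i> * complex_of_real (Im (cdot xs h))) *s xs)"
  note scalars = C'_R_set_scalar_conditions[OF assms(5,6), folded A_def I_def \<beta>_def \<rho>_def]
  have "1 / (t * \<eta>) > 0" using assms(3,4) by simp
  then have h: "norm h > 0" using assms(7) by linarith
  have \<rho>: "\<rho> > 0"
    by (rule rho_pos_of_norm_pos[OF assms(1) _ h scalars(1,2,3)]) (simp add: \<rho>_def)
  have A: "- sqrt (1 - \<delta>\<^sup>2) * \<rho> \<le> A"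
    using cone_condition_imp_lower_bound[OF assms(1,2) _ _ scalars(1,4)] by (simp add: \<beta>_def \<rho>_def)
  have "sqrt (1 - \<delta>\<^sup>2) * \<rho> < \<rho>"
    using \<rho> assms(1) by (simp add: power_le_one)
  then have \<rho>A: "\<rho> + A > 0" using A by linarith
  have "(1/2 - sqrt (1 - \<delta>\<^sup>2) / 2) * exp (- 2 * sqrt 2 * t / \<delta>\<^sup>2) \<le>
      (\<rho> + A) / (2 * \<rho>) * exp (- (1 / (\<eta> * (\<rho> + A))))"
    using norm_delta_sq_le_rho_plus_A[OF assms(1,2) _ \<rho> _ scalars(1,2,3) A] assms(7)
    by (intro tail_formula_lower_bound[OF assms(1-4) \<rho> A]) (simp_all add: \<beta>_def)
  then show ?thesis
    using measure_rinner_greater[OF assms(5,3), where h=h, folded \<rho>_def A_def, OF \<rho> \<rho>A] by simp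
qed

end
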